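(* (PVH Criterion.) If $\pi^{Syz}_p$ is surjective for all $p\ge 2$, then $K$ is quadratic, i.e. the natural surjection $A^m\to I_K^m/I_K^{m+1}$ is an isomorphism for all $m$. If moreover $X$ is finite and $A$ is Koszul, then it suffices that $\pi^{Syz}_p$ be surjective for $p=2$ and $p=3$.
   Context: Let $K$ be an augmented unital $\mathbb{Q}$-algebra generated by a set $X$, $F$ the free unital $\mathbb{Q}$-algebra on $X$, and $I_F\subseteq F$, $I_K\subseteq K$ the kernels of the algebra maps sending each $x\in X$ to $1$. Let $\tilde X=\mathbb{Q}\{x-1:x\in X\}$, so $F=T\tilde X=\bigoplus_p\tilde X^p$ and $I_F^p=\bigoplus_{q\ge p}\tilde X^q$. Let $M\subseteq I_F$ be a two-sided ideal with $K=F/M$. $K$ and $F$ are replaced by their completions with respect to powers of their augmentation ideals, and $M\subseteq I_F^2$ is assumed. Let $\{y_q:q\in Q\}\subseteq I_F^2$ generate $M$ as a two-sided ideal, $Y_F=\{Y_q\}$ symbols in bijection with them, $R$ the free two-sided $F$-module on $Y_F$, and $\partial_K:R\to F$ the bimodule map $Y_q\mapsto y_q$. Grade $R$ by $R_p=\sum_{q=0}^{p-2}\tilde X^q\cdot\mathbb{Q}Y_F\cdot\tilde X^{p-q-2}$ and set $R_{\ge p}=\bigoplus_{q\ge p}R_q$. Let $\pi^0_p:I_F^p\to\tilde X^p$, $\pi^1_p:R_{\ge p}\to R_p$ be the degree-$p$ projections, $\partial_A=\pi^0_p\circ\partial_K:R_p\to\tilde X^p$, and $A=\bigoplus_p\tilde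 X^p/\bigoplus_p\partial_A(R_p)$ with graded pieces $A^p$ (this is the quadratic approximation of $\operatorname{gr}K=\bigoplus_m I_K^m/I_K^{m+1}$, and there is a natural surjection $A^m\to I_K^m/I_K^{m+1}$ induced by $\tilde X^m\cong I_F^m/I_F^{m+1}\to I_K^m/I_K^{m+1}$). $\pi^{Syz}_p:\ker(\partial_K|_{R_{\ge p}})\to\ker(\partial_A|_{R_p})$ is the map induced by $\pi^1_p$. $K$ is called quadratic if $A^m\to I_K^m/I_K^{m+1}$ is an isomorphism for all $m$. *)

theory Defs
  imports Complex_Main
begin

text \<open>
The generating set X is the type 'x (all of it).  Writing t_x = x - 1,
the completed free algebra F (completion w.r.t. powers of I_F) is the space of
formal series  sum_w f(w) t_w  over words w in 'x list, with only finitely many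
nonzero coefficients in each length (= each homogeneous degree).  Generators y_q of M
are indexed by a type 'q.  The completed free bimodule R on the symbols Y_q has the
basis  t_u Y_q t_v  (triples (u,q,v)) of degree |u|+|v|+2.
\<close>

type_synonym 'x ser = "'x list \<Rightarrow> rat"
type_synonym ('x,'q) rser = "'x list \<times> 'q \<times> 'x list \<Rightarrow> rat"

definition Fhat :: "'x ser set" where
  "Fhat = {f. \<forall>n. finite {w. length w = n \<and> f w \<noteq> 0}}"

definition fzero :: "'x ser" where "fzero = (\<lambda>_. 0)"
definition fadd :: "'x ser \<Rightarrow> 'x ser \<Rightarrow> 'x ser" where "fadd f g = (\<lambda>w. f w + g w)"
definition fsub :: "'x ser \<Rightarrow> 'x ser \<Rightarrow> 'x ser" where "fsub f g = (\<lambda>w. f w - g w)"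

definition fmul :: "'x ser \<Rightarrow> 'x ser \<Rightarrow> 'x ser" where
  "fmul f g = (\<lambda>w. \<Sum>i\<le>length w. f (take i w) * g (drop i w))"

definition setplus :: "'x ser set \<Rightarrow> 'x ser set \<Rightarrow> 'x ser set" where
  "setplus S T = {fadd s t |s t. s \<in> S \<and> t \<in> T}"

definition IF :: "nat \<Rightarrow> 'x ser set" where
  "IF p = {f \<in> Fhat. \<forall>w. length w < p \<longrightarrow> f w = 0}"

definition Xt :: "nat \<Rightarrow> 'x ser set" where
  "Xt p = {f \<in> Fhat. \<forall>w. length w \<noteq> p \<longrightarrow> f w = 0}"

definition pi0 :: "nat \<Rightarrow> 'x ser \<Rightarrow> 'x ser" where
  "pi0 p f = (\<lambda>w. if length w = p then f w else 0)"

definition rdeg :: "'x list \<times> 'q \<times> 'x list \<Rightarrow> nat" where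
  "rdeg b = length (fst b) + length (snd (snd b)) + 2"

definition Rhat :: "('x,'q) rser set" where
  "Rhat = {r. \<forall>n. finite {b. rdeg b = n \<and> r b \<noteq> 0}}"

definition Rge :: "nat \<Rightarrow> ('x,'q) rser set" where
  "Rge p = {r \<in> Rhat. \<forall>b. rdeg b < p \<longrightarrow> r b = 0}"

definition Rdeg :: "nat \<Rightarrow> ('x,'q) rser set" where
  "Rdeg p = {r \<in> Rhat. \<forall>b. rdeg b \<noteq> p \<longrightarrow> r b = 0}"

definition pi1 :: "nat \<Rightarrow> ('x,'q) rser \<Rightarrow> ('x,'q) rser" where
  "pi1 p r = (\<lambda>b. if rdeg b = p then r b else 0)"

text \<open>partial_K : R \<rightarrow> F, the bimodule map t_u Y_q t_v \<mapsto> t_u y_q t_v.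
  Coefficient at w: sum over decompositions w = u @ m @ v.\<close>
definition dK :: "('q \<Rightarrow> 'x ser) \<Rightarrow> ('x,'q) rser \<Rightarrow> 'x ser" where
  "dK y r = (\<lambda>w. \<Sum>b \<in> {(u,q,v). r (u,q,v) \<noteq> 0 \<and> length u + length v \<le> length w
                     \<and> take (length u) w = u \<and> drop (length w - length v) w = v}.
       r b * y (fst (snd b))
         (drop (length (fst b)) (take (length w - length (snd (snd b))) w)))"

text \<open>M = the (closed) two-sided ideal generated by the y_q = image of partial_K.\<close>
definition Mid :: "('q \<Rightarrow> 'x ser) \<Rightarrow> 'x ser set" where
  "Mid y = dK y ` Rhat"

definition dA :: "('q \<Rightarrow> 'x ser) \<Rightarrow> nat \<Rightarrow> ('x,'q) rser \<Rightarrow> 'x ser" where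
  "dA y p r = pi0 p (dK y r)"

definition JA :: "('q \<Rightarrow> 'x ser) \<Rightarrow> nat \<Rightarrow> 'x ser set" where
  "JA y p = dA y p ` Rdeg p"

definition kerK :: "('q \<Rightarrow> 'x ser) \<Rightarrow> nat \<Rightarrow> ('x,'q) rser set" where
  "kerK y p = {r \<in> Rge p. dK y r = fzero}"

definition kerA :: "('q \<Rightarrow> 'x ser) \<Rightarrow> nat \<Rightarrow> ('x,'q) rser set" where
  "kerA y p = {r \<in> Rdeg p. dA y p r = fzero}"

definition syz_surj :: "('q \<Rightarrow> 'x ser) \<Rightarrow> nat \<Rightarrow> bool" where
  "syz_surj y p = (\<forall>s \<in> kerA y p. \<exists>r \<in> kerK y p. pi1 p r = s)"

text \<open>K = F/M as cosets; I_K^m = image of I_F^m; A^m = X~^m / partial_A(R_m);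
  gr^m K = I_K^m / I_K^{m+1}; the natural map A^m \<rightarrow> gr^m K.\<close>
definition qK :: "('q \<Rightarrow> 'x ser) \<Rightarrow> 'x ser \<Rightarrow> 'x ser set" where
  "qK y f = {g \<in> Fhat. fsub g f \<in> Mid y}"

definition IK :: "('q \<Rightarrow> 'x ser) \<Rightarrow> nat \<Rightarrow> 'x ser set set" where
  "IK y m = qK y ` IF m"

definition Aquot :: "('q \<Rightarrow> 'x ser) \<Rightarrow> nat \<Rightarrow> 'x ser set set" where
  "Aquot y m = (\<lambda>v. {v' \<in> Xt m. fsub v' v \<in> JA y m}) ` Xt m"

definition grclass :: "('q \<Rightarrow> 'x ser) \<Rightarrow> nat \<Rightarrow> 'x ser set \<Rightarrow> 'x ser set set" where
  "grclass y m k = {k' \<in> IK y m. \<exists>g f. k' = qK y g \<and> k = qK y f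
                        \<and> qK y (fsub g f) \<in> IK y (Suc m)}"

definition grK :: "('q \<Rightarrow> 'x ser) \<Rightarrow> nat \<Rightarrow> 'x ser set set set" where
  "grK y m = grclass y m ` IK y m"

definition natmap :: "('q \<Rightarrow> 'x ser) \<Rightarrow> nat \<Rightarrow> 'x ser set \<Rightarrow> 'x ser set set" where
  "natmap y m a = grclass y m (qK y (SOME v. v \<in> a))"

definition quadratic :: "('q \<Rightarrow> 'x ser) \<Rightarrow> bool" where
  "quadratic y = (\<forall>m. bij_betw (natmap y m) (Aquot y m) (grK y m))"

text \<open>Koszulness of A = T(V)/(W), V = X~^1, W = partial_A(R_2) \<subseteq> V\<otimes>V, via acyclicity of
  the Koszul complex  ... \<rightarrow> A \<otimes> W_n \<rightarrow> A \<otimes> W_{n-1} \<rightarrow> ... \<rightarrow> A \<rightarrow> Q \<rightarrow> 0,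
  W_n = \<Inter>_{i+j+2=n} V^i W V^j (W_0 = Q, W_1 = V), differential a\<otimes>v_1..v_n \<mapsto> a v_1 \<otimes> v_2..v_n.
  In internal degree m, A^{m-n}\<otimes>W_n = (V^{m-n}\<otimes>W_n)/(J_{m-n}\<otimes>W_n) \<subseteq> quotient of V^{\<otimes>m},
  and the differential is induced by the identity of V^{\<otimes>m}.\<close>
definition lspan :: "'x ser set \<Rightarrow> 'x ser set" where
  "lspan S = {f. \<exists>n (c::nat \<Rightarrow> rat) s. (\<forall>i<n. s i \<in> S) \<and> f = (\<lambda>w. \<Sum>i<n. c i * s i w)}"

definition tens :: "'x ser set \<Rightarrow> 'x ser set \<Rightarrow> 'x ser set" where
  "tens S T = lspan {fmul s t |s t. s \<in> S \<and> t \<in> T}"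

definition Wn :: "('q \<Rightarrow> 'x ser) \<Rightarrow> nat \<Rightarrow> 'x ser set" where
  "Wn y n = (if n = 0 then Xt 0 else if n = 1 then Xt 1
             else (\<Inter>i\<in>{..n-2}. tens (tens (Xt i) (JA y 2)) (Xt (n - 2 - i))))"

definition kzC :: "('q \<Rightarrow> 'x ser) \<Rightarrow> nat \<Rightarrow> nat \<Rightarrow> 'x ser set" where
  "kzC y m n = (if n \<le> m then tens (Xt (m - n)) (Wn y n) else {fzero})"

definition kzRel :: "('q \<Rightarrow> 'x ser) \<Rightarrow> nat \<Rightarrow> nat \<Rightarrow> 'x ser set" where
  "kzRel y m n = (if n \<le> m then tens (JA y (m - n)) (Wn y n) else {fzero})"

definition koszul :: "('q \<Rightarrow> 'x ser) \<Rightarrow> bool" where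
  "koszul y = (\<forall>m\<ge>1. \<forall>n\<le>m.
      (if n = 0 then kzC y m 0 else kzC y m n \<inter> kzRel y m (n - 1))
        \<subseteq> setplus (kzC y m (Suc n)) (kzRel y m n))"

end

theory Submission
  imports Defs "HOL-Library.Function_Algebras"
begin

text \<open>
An element of M = dK(R) lying in I_F^m is dK of some r \<in> R_{\<ge>m}: if r \<in> R_{\<ge>k} with k < m,
the leading part pi1_k r is a syzygy of dA, hence by surjectivity of pi^Syz_k the leading part of
a syzygy r' of dK, and r - r' \<in> R_{\<ge>k+1}.  Taking degree-m parts, an element of X~^m congruent
modulo M to an element of I_F^{m+1} lies in dA(R_m), which is injectivity of A^m \<rightarrow> gr^m K;
surjectivity holds for any presentation.

In the Koszul case write J_n = dA(R_n), W = J_2, and call a syzygy of dA in R_p lifted if it lies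
in the image of pi^Syz_p.  Lifted syzygies are stable under multiplication by X~ on both sides and
contain the trivial syzygies r dA(\<rho>) - dA(r) \<rho>.  For p \<ge> 4 and a syzygy s in R_p, the part s_0 of s with empty right word
has dA(s_0) \<in> X~^{p-2} W \<inter> J_{p-1} V, so exactness of the Koszul complex puts it in
X~^{p-3} W_3 + J_{p-2} W.  Using liftability in degrees 2 and 3 and trivial syzygies, s is changed
by lifted syzygies into a syzygy all of whose terms end in a letter; stripping that letter lowers
the degree by one.
\<close>

lemma sum_fun_apply: "(sum F A) x = (\<Sum>a\<in>A. F a x)"
  by (induction A rule: infinite_finite_induct) auto

lemma sum_Sigma_split: "finite A \<Longrightarrow> (\<And>x. x\<in>A \<Longrightarrow> finite (B x)) \<Longrightarrow> (\<Sum>x\<in>A. \<Sum>y\<in>B x. g x y) = (\<Sum>p\<in>Sigma A B. g (fst p) (snd p))"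
  by (simp add: sum.Sigma split_def)

definition splits2 :: "'a list \<Rightarrow> ('a list \<times> 'a list) set" where
  "splits2 w = {(a,b). a @ b = w}"
definition splits3 :: "'a list \<Rightarrow> ('a list \<times> 'a list \<times> 'a list) set" where
  "splits3 w = {(a,b,c). a @ b @ c = w}"
definition splits4 :: "'a list \<Rightarrow> ('a list \<times> 'a list \<times> 'a list \<times> 'a list) set" where
  "splits4 w = {(a,b,c,d). a @ b @ c @ d = w}"

lemma splits2_eq: "splits2 w = (\<lambda>i. (take i w, drop i w)) ` {..length w}"
  unfolding splits2_def
proof (safe)
  fix a b assume "w = a @ b" then show "(a, b) \<in> (\<lambda>i. (take i (a@b), drop i (a@b))) ` {..length (a@b)}"
    by (intro image_eqI[where x="length a"]) auto
qed auto

lemma finite_splits2[simp]: "finite (splits2 w)" by (simp add: splits2_eq)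

lemma splits3_eq: "splits3 w = (\<lambda>((a,x),(b,c)). (a,b,c)) ` Sigma (splits2 w) (\<lambda>(a,x). splits2 x)"
  unfolding splits3_def splits2_def by (force simp: image_iff)

lemma finite_splits3[simp]: "finite (splits3 w)"
  unfolding splits3_eq by (rule finite_imageI, rule finite_SigmaI) auto

lemma sum_splits2_splits3_right: "(\<Sum>(a,x)\<in>splits2 w. \<Sum>(b,c,d)\<in>splits3 x. F a b c d) = (\<Sum>(a,b,c,d)\<in>splits4 w. F a b c d)"
proof -
  have "(\<Sum>(a,x)\<in>splits2 w. \<Sum>(b,c,d)\<in>splits3 x. F a b c d) = (\<Sum>((a,x),(b,c,d))\<in>Sigma (splits2 w) (\<lambda>(a,x). splits3 x). F a b c d)"
    unfolding split_def by (rule sum_Sigma_split) auto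
  also have "\<dots> = (\<Sum>(a,b,c,d)\<in>splits4 w. F a b c d)"
    by (rule sum.reindex_bij_witness[where i="\<lambda>(a,b,c,d). ((a,b@c@d),(b,c,d))" and j="\<lambda>((a,x),(b,c,d)). (a,b,c,d)"])
       (auto simp: splits3_def splits2_def splits4_def)
  finally show ?thesis .
qed

lemma sum_splits2_splits3_left: "(\<Sum>(x,d)\<in>splits2 w. \<Sum>(a,b,c)\<in>splits3 x. F a b c d) = (\<Sum>(a,b,c,d)\<in>splits4 w. F a b c d)"
proof -
  have "(\<Sum>(x,d)\<in>splits2 w. \<Sum>(a,b,c)\<in>splits3 x. F a b c d) = (\<Sum>((x,d),(a,b,c))\<in>Sigma (splits2 w) (\<lambda>(x,d). splits3 x). F a b c d)"
    unfolding split_def by (rule sum_Sigma_split) auto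
  also have "\<dots> = (\<Sum>(a,b,c,d)\<in>splits4 w. F a b c d)"
    by (rule sum.reindex_bij_witness[where i="\<lambda>(a,b,c,d). ((a@b@c,d),(a,b,c))" and j="\<lambda>((x,d),(a,b,c)). (a,b,c,d)"])
       (auto simp: splits3_def splits2_def splits4_def)
  finally show ?thesis .
qed

lemma sum_splits3_splits2_first: "(\<Sum>(x,c,d)\<in>splits3 w. \<Sum>(a,b)\<in>splits2 x. F a b c d) = (\<Sum>(a,b,c,d)\<in>splits4 w. F a b c d)"
proof -
  have "(\<Sum>(x,c,d)\<in>splits3 w. \<Sum>(a,b)\<in>splits2 x. F a b c d) = (\<Sum>((x,c,d),(a,b))\<in>Sigma (splits3 w) (\<lambda>(x,c,d). splits2 x). F a b c d)"
    unfolding split_def by (rule sum_Sigma_split) auto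
  also have "\<dots> = (\<Sum>(a,b,c,d)\<in>splits4 w. F a b c d)"
    by (rule sum.reindex_bij_witness[where i="\<lambda>(a,b,c,d). ((a@b,c,d),(a,b))" and j="\<lambda>((x,c,d),(a,b)). (a,b,c,d)"])
       (auto simp: splits3_def splits2_def splits4_def)
  finally show ?thesis .
qed

lemma sum_splits3_splits2_last: "(\<Sum>(a,b,x)\<in>splits3 w. \<Sum>(c,d)\<in>splits2 x. F a b c d) = (\<Sum>(a,b,c,d)\<in>splits4 w. F a b c d)"
proof -
  have "(\<Sum>(a,b,x)\<in>splits3 w. \<Sum>(c,d)\<in>splits2 x. F a b c d) = (\<Sum>((a,b,x),(c,d))\<in>Sigma (splits3 w) (\<lambda>(a,b,x). splits2 x). F a b c d)"
    unfolding split_def by (rule sum_Sigma_split) auto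
  also have "\<dots> = (\<Sum>(a,b,c,d)\<in>splits4 w. F a b c d)"
    by (rule sum.reindex_bij_witness[where i="\<lambda>(a,b,c,d). ((a,b,c@d),(c,d))" and j="\<lambda>((a,b,x),(c,d)). (a,b,c,d)"])
       (auto simp: splits3_def splits2_def splits4_def)
  finally show ?thesis .
qed

lemma fmul_splits2: "fmul f g w = (\<Sum>(a,b)\<in>splits2 w. f a * g b)"
proof -
  have "inj_on (\<lambda>i. (take i w, drop i w)) {..length w}"
    by (auto simp: inj_on_def) (metis length_take min.absorb2)
  then show ?thesis unfolding fmul_def splits2_eq by (subst sum.reindex) (auto intro!: sum.cong)
qed


lemma Fhat_zero[simp]: "(0::'x ser) \<in> Fhat" by (simp add: Fhat_def)

lemma Fhat_add: assumes "f \<in> Fhat" "g \<in> Fhat" shows "f + g \<in> Fhat"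
  unfolding Fhat_def
proof (intro CollectI allI)
  fix n
  have "{w. length w = n \<and> (f+g) w \<noteq> 0} \<subseteq> {w. length w = n \<and> f w \<noteq> 0} \<union> {w. length w = n \<and> g w \<noteq> 0}" by auto
  moreover have "finite {w. length w = n \<and> f w \<noteq> 0}" "finite {w. length w = n \<and> g w \<noteq> 0}" using assms by (simp_all add: Fhat_def)
  ultimately show "finite {w. length w = n \<and> (f+g) w \<noteq> 0}" by (meson finite_UnI rev_finite_subset)
qed

lemma Fhat_uminus: assumes "f \<in> Fhat" shows "- f \<in> Fhat"
  using assms unfolding Fhat_def by simp

lemma Fhat_diff: assumes "f \<in> Fhat" "g \<in> Fhat" shows "f - g \<in> Fhat"
  using Fhat_add[OF assms(1) Fhat_uminus[OF assms(2)]] by simp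

lemma Rhat_zero[simp]: "(0::('x,'q) rser) \<in> Rhat" by (simp add: Rhat_def)

lemma Rhat_add: assumes "f \<in> Rhat" "g \<in> Rhat" shows "f + g \<in> Rhat"
  unfolding Rhat_def
proof (intro CollectI allI)
  fix n
  have "{w. rdeg w = n \<and> (f+g) w \<noteq> 0} \<subseteq> {w. rdeg w = n \<and> f w \<noteq> 0} \<union> {w. rdeg w = n \<and> g w \<noteq> 0}" by auto
  moreover have "finite {w. rdeg w = n \<and> f w \<noteq> 0}" "finite {w. rdeg w = n \<and> g w \<noteq> 0}" using assms by (simp_all add: Rhat_def)
  ultimately show "finite {w. rdeg w = n \<and> (f+g) w \<noteq> 0}" by (meson finite_UnI rev_finite_subset)
qed

lemma Rhat_uminus: assumes "f \<in> Rhat" shows "- f \<in> Rhat"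
  using assms unfolding Rhat_def by simp

lemma Rhat_diff: assumes "f \<in> Rhat" "g \<in> Rhat" shows "f - g \<in> Rhat"
  using Rhat_add[OF assms(1) Rhat_uminus[OF assms(2)]] by simp

lemma Rhat_smult: assumes "f \<in> Rhat" shows "(\<lambda>w. c * f w) \<in> Rhat"
  unfolding Rhat_def
proof (intro CollectI allI)
  fix n
  have "{w. rdeg w = n \<and> c * f w \<noteq> 0} \<subseteq> {w. rdeg w = n \<and> f w \<noteq> 0}" by auto
  moreover have "finite {w. rdeg w = n \<and> f w \<noteq> 0}" using assms by (simp add: Rhat_def)
  ultimately show "finite {w. rdeg w = n \<and> c * f w \<noteq> 0}" by (rule finite_subset)
qed

lemma Rhat_sum: "(\<And>i. i \<in> I \<Longrightarrow> F i \<in> Rhat) \<Longrightarrow> sum F I \<in> Rhat"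
  by (induction I rule: infinite_finite_induct) (simp_all add: Rhat_add)

definition gens_supp :: "('x,'q) rser \<Rightarrow> 'x list \<Rightarrow> 'x list \<Rightarrow> 'q set" where
  "gens_supp r u v = {q. r (u,q,v) \<noteq> 0}"

lemma finite_gens_supp: assumes "r \<in> Rhat" shows "finite (gens_supp r u v)"
proof -
  have "gens_supp r u v \<subseteq> (\<lambda>b. fst (snd b)) ` {b. rdeg b = length u + length v + 2 \<and> r b \<noteq> 0}"
  proof
    fix q assume "q \<in> gens_supp r u v"
    then show "q \<in> (\<lambda>b. fst (snd b)) ` {b. rdeg b = length u + length v + 2 \<and> r b \<noteq> 0}"
      by (intro image_eqI[where x="(u,q,v)"]) (simp_all add: gens_supp_def rdeg_def)
  qed
  moreover have "finite {b. rdeg b = length u + length v + 2 \<and> r b \<noteq> 0}" using assms by (simp add: Rhat_def)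
  ultimately show ?thesis using finite_imageI finite_subset by blast
qed

definition dK_coeff :: "('q \<Rightarrow> 'x ser) \<Rightarrow> ('x,'q) rser \<Rightarrow> 'x list \<Rightarrow> 'x list \<Rightarrow> 'x list \<Rightarrow> rat" where
  "dK_coeff y r u v m = (\<Sum>q\<in>gens_supp r u v. r (u,q,v) * y q m)"

lemma dK_coeff_superset: assumes "finite Q" "gens_supp r u v \<subseteq> Q"
  shows "dK_coeff y r u v m = (\<Sum>q\<in>Q. r (u,q,v) * y q m)"
  unfolding dK_coeff_def using assms by (intro sum.mono_neutral_left) (auto simp: gens_supp_def)

lemma take_drop_middle_append: assumes "length u + length v \<le> length w" "take (length u) w = u" "drop (length w - length v) w = v"
  shows "u @ drop (length u) (take (length w - length v) w) @ v = w"
proof -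
  have le: "length u \<le> length w - length v" using assms(1) by arith
  have "take (length u) (take (length w - length v) w) = u" using assms(2) le by (simp add: take_take min_absorb1)
  then have "u @ drop (length u) (take (length w - length v) w) = take (length w - length v) w"
    by (metis append_take_drop_id)
  then show ?thesis using assms(3) by (metis append.assoc append_take_drop_id)
qed

lemma dK_splits3: assumes "r \<in> Rhat" shows "dK y r w = (\<Sum>(u,m,v)\<in>splits3 w. dK_coeff y r u v m)"
proof -
  have "(\<Sum>(u,m,v)\<in>splits3 w. dK_coeff y r u v m) = (\<Sum>x\<in>splits3 w. \<Sum>q\<in>gens_supp r (fst x) (snd (snd x)). r (fst x, q, snd (snd x)) * y q (fst (snd x)))"
    by (simp add: dK_coeff_def split_def)
  also have "\<dots> = (\<Sum>p\<in>Sigma (splits3 w) (\<lambda>x. gens_supp r (fst x) (snd (snd x))). r (fst (fst p), snd p, snd (snd (fst p))) * y (snd p) (fst (snd (fst p))))"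
    by (rule sum_Sigma_split) (auto intro: finite_gens_supp[OF assms])
  also have "\<dots> = dK y r w"
    unfolding dK_def
    by (rule sum.reindex_bij_witness[where i="\<lambda>(u,q,v). ((u, drop (length u) (take (length w - length v) w), v), q)"
          and j="\<lambda>((u,m,v),q). (u,q,v)"])
       (auto simp: splits3_def gens_supp_def take_drop_middle_append)
  finally show ?thesis by simp
qed


lemma dK_coeff_add: assumes "r1 \<in> Rhat" "r2 \<in> Rhat"
  shows "dK_coeff y (r1 + r2) u v m = dK_coeff y r1 u v m + dK_coeff y r2 u v m"
proof -
  let ?Q = "gens_supp r1 u v \<union> gens_supp r2 u v"
  have fQ: "finite ?Q" using finite_gens_supp assms by blast
  have "dK_coeff y (r1 + r2) u v m = (\<Sum>q\<in>?Q. (r1 + r2) (u,q,v) * y q m)"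
    by (rule dK_coeff_superset[OF fQ]) (auto simp: gens_supp_def)
  also have "\<dots> = (\<Sum>q\<in>?Q. r1 (u,q,v) * y q m) + (\<Sum>q\<in>?Q. r2 (u,q,v) * y q m)"
    by (simp add: distrib_right sum.distrib)
  also have "\<dots> = dK_coeff y r1 u v m + dK_coeff y r2 u v m"
    using dK_coeff_superset[OF fQ, of r1] dK_coeff_superset[OF fQ, of r2] by auto
  finally show ?thesis .
qed

lemma dK_coeff_smult: assumes "r \<in> Rhat"
  shows "dK_coeff y (\<lambda>b. c * r b) u v m = c * dK_coeff y r u v m"
proof -
  have fQ: "finite (gens_supp r u v)" using finite_gens_supp assms by blast
  have "dK_coeff y (\<lambda>b. c * r b) u v m = (\<Sum>q\<in>gens_supp r u v. c * r (u,q,v) * y q m)"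
    by (rule dK_coeff_superset[OF fQ]) (auto simp: gens_supp_def)
  also have "\<dots> = c * dK_coeff y r u v m" by (simp add: dK_coeff_def sum_distrib_left mult.assoc)
  finally show ?thesis .
qed

lemma dK_coeff_zero[simp]: "dK_coeff y 0 u v m = 0" by (simp add: dK_coeff_def gens_supp_def)

lemma dK_add: assumes "r1 \<in> Rhat" "r2 \<in> Rhat" shows "dK y (r1 + r2) = dK y r1 + dK y r2"
proof
  fix w show "dK y (r1 + r2) w = (dK y r1 + dK y r2) w"
    using assms by (simp add: dK_splits3 Rhat_add dK_coeff_add split_def sum.distrib)
qed

lemma dK_smult: assumes "r \<in> Rhat" shows "dK y (\<lambda>b. c * r b) = (\<lambda>w. c * dK y r w)"
proof
  fix w show "dK y (\<lambda>b. c * r b) w = c * dK y r w"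
    using assms by (simp add: dK_splits3 Rhat_smult dK_coeff_smult split_def sum_distrib_left)
qed

lemma dK_zero[simp]: "dK y 0 = 0"
  by (rule ext) (simp add: dK_splits3)

lemma dK_uminus: assumes "r \<in> Rhat" shows "dK y (- r) = - dK y r"
proof -
  have "- r = (\<lambda>b. (-1) * r b)" by auto
  show ?thesis unfolding \<open>- r = (\<lambda>b. (-1) * r b)\<close> dK_smult[OF assms] by (simp add: fun_eq_iff)
qed

lemma dK_diff: assumes "r1 \<in> Rhat" "r2 \<in> Rhat" shows "dK y (r1 - r2) = dK y r1 - dK y r2"
  using dK_add[OF assms(1) Rhat_uminus[OF assms(2)]] dK_uminus[OF assms(2)] by simp

section \<open>Bimodule structure\<close>

definition lmul :: "'x ser \<Rightarrow> ('x,'q) rser \<Rightarrow> ('x,'q) rser" where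
  "lmul f r = (\<lambda>(u,q,v). \<Sum>(a,b)\<in>splits2 u. f a * r (b,q,v))"
definition rmul :: "('x,'q) rser \<Rightarrow> 'x ser \<Rightarrow> ('x,'q) rser" where
  "rmul r g = (\<lambda>(u,q,v). \<Sum>(c,d)\<in>splits2 v. r (u,q,c) * g d)"

lemma lmul_apply: "lmul f r (u,q,v) = (\<Sum>(a,b)\<in>splits2 u. f a * r (b,q,v))" by (simp add: lmul_def)
lemma rmul_apply: "rmul r g (u,q,v) = (\<Sum>(c,d)\<in>splits2 v. r (u,q,c) * g d)" by (simp add: rmul_def)

lemma Rhat_lmul: assumes f: "f \<in> Fhat" and r: "r \<in> Rhat" shows "lmul f r \<in> Rhat"
  unfolding Rhat_def
proof (intro CollectI allI)
  fix n
  let ?A = "\<Union>i\<le>n. {w. length w = i \<and> f w \<noteq> 0} \<times> {b. rdeg b = n - i \<and> r b \<noteq> 0}"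
  have ff: "\<And>i. finite {w. length w = i \<and> f w \<noteq> 0}" using f by (simp add: Fhat_def)
  have rr: "\<And>i. finite {b. rdeg b = i \<and> r b \<noteq> 0}" using r by (simp add: Rhat_def)
  have fin: "finite ?A" using ff rr by (intro finite_UN_I finite_cartesian_product) auto
  have "{b. rdeg b = n \<and> lmul f r b \<noteq> 0} \<subseteq> (\<lambda>(a,(b,q,v)). (a @ b, q, v)) ` ?A"
  proof
    fix t assume "t \<in> {b. rdeg b = n \<and> lmul f r b \<noteq> 0}"
    moreover obtain u q v where t: "t = (u,q,v)" by (cases t)
    ultimately have n: "rdeg (u,q,v) = n" and nz: "(\<Sum>(a,b)\<in>splits2 u. f a * r (b,q,v)) \<noteq> 0"
      by (auto simp: lmul_apply)
    from nz obtain p where p: "p \<in> splits2 u" "(case p of (a,b) \<Rightarrow> f a * r (b,q,v)) \<noteq> 0" by (rule sum.not_neutral_contains_not_neutral)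
    obtain a b where ab: "p = (a,b)" by (cases p)
    show "t \<in> (\<lambda>(a,(b,q,v)). (a @ b, q, v)) ` ?A"
      using p n unfolding t by (intro image_eqI[where x="(a,(b,q,v))"]) (auto simp: ab splits2_def rdeg_def)
  qed
  then show "finite {b. rdeg b = n \<and> lmul f r b \<noteq> 0}" using finite_imageI[OF fin] by (rule finite_subset)
qed

lemma Rhat_rmul: assumes g: "g \<in> Fhat" and r: "r \<in> Rhat" shows "rmul r g \<in> Rhat"
  unfolding Rhat_def
proof (intro CollectI allI)
  fix n
  let ?A = "\<Union>i\<le>n. {b. rdeg b = n - i \<and> r b \<noteq> 0} \<times> {w. length w = i \<and> g w \<noteq> 0}"
  have gg: "\<And>i. finite {w. length w = i \<and> g w \<noteq> 0}" using g by (simp add: Fhat_def)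
  have rr: "\<And>i. finite {b. rdeg b = i \<and> r b \<noteq> 0}" using r by (simp add: Rhat_def)
  have fin: "finite ?A" using gg rr by (intro finite_UN_I finite_cartesian_product) auto
  have "{b. rdeg b = n \<and> rmul r g b \<noteq> 0} \<subseteq> (\<lambda>((u,q,c),d). (u, q, c @ d)) ` ?A"
  proof
    fix t assume "t \<in> {b. rdeg b = n \<and> rmul r g b \<noteq> 0}"
    moreover obtain u q v where t: "t = (u,q,v)" by (cases t)
    ultimately have n: "rdeg (u,q,v) = n" and nz: "(\<Sum>(c,d)\<in>splits2 v. r (u,q,c) * g d) \<noteq> 0"
      by (auto simp: rmul_apply)
    from nz obtain p where p: "p \<in> splits2 v" "(case p of (c,d) \<Rightarrow> r (u,q,c) * g d) \<noteq> 0" by (rule sum.not_neutral_contains_not_neutral)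
    obtain c d where cd: "p = (c,d)" by (cases p)
    show "t \<in> (\<lambda>((u,q,c),d). (u, q, c @ d)) ` ?A"
      using p n unfolding t by (intro image_eqI[where x="((u,q,c),d)"]) (auto simp: cd splits2_def rdeg_def)
  qed
  then show "finite {b. rdeg b = n \<and> rmul r g b \<noteq> 0}" using finite_imageI[OF fin] by (rule finite_subset)
qed

lemma dK_coeff_lmul: assumes r: "r \<in> Rhat"
  shows "dK_coeff y (lmul f r) u v m = (\<Sum>(a,b)\<in>splits2 u. f a * dK_coeff y r b v m)"
proof -
  let ?Q = "\<Union>p\<in>splits2 u. gens_supp r (snd p) v"
  have fQ: "finite ?Q" using finite_gens_supp[OF r] by auto
  have sub: "gens_supp (lmul f r) u v \<subseteq> ?Q"
  proof
    fix q assume "q \<in> gens_supp (lmul f r) u v"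
    then have "(\<Sum>(a,b)\<in>splits2 u. f a * r (b,q,v)) \<noteq> 0" by (simp add: gens_supp_def lmul_apply)
    then obtain p where "p \<in> splits2 u" "(case p of (a,b) \<Rightarrow> f a * r (b,q,v)) \<noteq> 0" by (rule sum.not_neutral_contains_not_neutral)
    then show "q \<in> ?Q" by (cases p) (force simp: gens_supp_def)
  qed
  have "dK_coeff y (lmul f r) u v m = (\<Sum>q\<in>?Q. (\<Sum>(a,b)\<in>splits2 u. f a * r (b,q,v)) * y q m)"
    by (subst dK_coeff_superset[OF fQ sub]) (simp add: lmul_apply)
  also have "\<dots> = (\<Sum>(a,b)\<in>splits2 u. f a * (\<Sum>q\<in>?Q. r (b,q,v) * y q m))"
    by (simp add: sum_distrib_left sum_distrib_right split_def mult.assoc sum.swap[where B="splits2 u"])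
  also have "\<dots> = (\<Sum>(a,b)\<in>splits2 u. f a * dK_coeff y r b v m)"
  proof (rule sum.cong[OF refl])
    fix p assume p: "p \<in> splits2 u"
    obtain a b where ab: "p = (a,b)" by (cases p)
    have "gens_supp r b v \<subseteq> ?Q" using p ab by force
    from dK_coeff_superset[OF fQ this] show "(case p of (a,b) \<Rightarrow> f a * (\<Sum>q\<in>?Q. r (b,q,v) * y q m)) = (case p of (a,b) \<Rightarrow> f a * dK_coeff y r b v m)"
      using ab by simp
  qed
  finally show ?thesis .
qed

lemma dK_coeff_rmul: assumes r: "r \<in> Rhat"
  shows "dK_coeff y (rmul r g) u v m = (\<Sum>(c,d)\<in>splits2 v. dK_coeff y r u c m * g d)"
proof -
  let ?Q = "\<Union>p\<in>splits2 v. gens_supp r u (fst p)"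
  have fQ: "finite ?Q" using finite_gens_supp[OF r] by auto
  have sub: "gens_supp (rmul r g) u v \<subseteq> ?Q"
  proof
    fix q assume "q \<in> gens_supp (rmul r g) u v"
    then have "(\<Sum>(c,d)\<in>splits2 v. r (u,q,c) * g d) \<noteq> 0" by (simp add: gens_supp_def rmul_apply)
    then obtain p where "p \<in> splits2 v" "(case p of (c,d) \<Rightarrow> r (u,q,c) * g d) \<noteq> 0" by (rule sum.not_neutral_contains_not_neutral)
    then show "q \<in> ?Q" by (cases p) (force simp: gens_supp_def)
  qed
  have "dK_coeff y (rmul r g) u v m = (\<Sum>q\<in>?Q. (\<Sum>(c,d)\<in>splits2 v. r (u,q,c) * g d) * y q m)"
    by (subst dK_coeff_superset[OF fQ sub]) (simp add: rmul_apply)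
  also have "\<dots> = (\<Sum>(c,d)\<in>splits2 v. (\<Sum>q\<in>?Q. r (u,q,c) * y q m) * g d)"
    by (simp add: sum_distrib_left sum_distrib_right split_def mult.assoc mult.commute mult.left_commute sum.swap[where B="splits2 v"])
  also have "\<dots> = (\<Sum>(c,d)\<in>splits2 v. dK_coeff y r u c m * g d)"
  proof (rule sum.cong[OF refl])
    fix p assume p: "p \<in> splits2 v"
    obtain c d where cd: "p = (c,d)" by (cases p)
    have "gens_supp r u c \<subseteq> ?Q" using p cd by force
    from dK_coeff_superset[OF fQ this] show "(case p of (c,d) \<Rightarrow> (\<Sum>q\<in>?Q. r (u,q,c) * y q m) * g d) = (case p of (c,d) \<Rightarrow> dK_coeff y r u c m * g d)"
      using cd by simp
  qed
  finally show ?thesis .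
qed

lemma dK_lmul: assumes f: "f \<in> Fhat" and r: "r \<in> Rhat" shows "dK y (lmul f r) = fmul f (dK y r)"
proof
  fix w
  have "dK y (lmul f r) w = (\<Sum>(u,m,v)\<in>splits3 w. \<Sum>(a,b)\<in>splits2 u. f a * dK_coeff y r b v m)"
    by (simp add: dK_splits3[OF Rhat_lmul[OF f r]] dK_coeff_lmul[OF r])
  also have "\<dots> = (\<Sum>(a,b,m,v)\<in>splits4 w. f a * dK_coeff y r b v m)"
    by (rule sum_splits3_splits2_first)
  also have "\<dots> = (\<Sum>(a,c)\<in>splits2 w. \<Sum>(b,m,v)\<in>splits3 c. f a * dK_coeff y r b v m)"
    by (rule sum_splits2_splits3_right[symmetric])
  also have "\<dots> = fmul f (dK y r) w"
    by (simp add: fmul_splits2 dK_splits3[OF r] sum_distrib_left split_def)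
  finally show "dK y (lmul f r) w = fmul f (dK y r) w" .
qed

lemma dK_rmul: assumes g: "g \<in> Fhat" and r: "r \<in> Rhat" shows "dK y (rmul r g) = fmul (dK y r) g"
proof
  fix w
  have "dK y (rmul r g) w = (\<Sum>(u,m,v)\<in>splits3 w. \<Sum>(c,d)\<in>splits2 v. dK_coeff y r u c m * g d)"
    by (simp add: dK_splits3[OF Rhat_rmul[OF g r]] dK_coeff_rmul[OF r])
  also have "\<dots> = (\<Sum>(u,m,c,d)\<in>splits4 w. dK_coeff y r u c m * g d)"
    by (rule sum_splits3_splits2_last)
  also have "\<dots> = (\<Sum>(a,d)\<in>splits2 w. \<Sum>(u,m,c)\<in>splits3 a. dK_coeff y r u c m * g d)"
    by (rule sum_splits2_splits3_left[symmetric])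
  also have "\<dots> = fmul (dK y r) g w"
    by (simp add: fmul_splits2 dK_splits3[OF r] sum_distrib_right split_def)
  finally show "dK y (rmul r g) w = fmul (dK y r) g w" .
qed


lemma IF_Fhat: "f \<in> IF p \<Longrightarrow> f \<in> Fhat" by (simp add: IF_def)
lemma Xt_Fhat: "f \<in> Xt p \<Longrightarrow> f \<in> Fhat" by (simp add: Xt_def)
lemma Xt_IF: "f \<in> Xt p \<Longrightarrow> f \<in> IF p" by (auto simp: Xt_def IF_def)
lemma IF_zero[simp]: "0 \<in> IF p" by (simp add: IF_def)
lemma IF_add: "f \<in> IF p \<Longrightarrow> g \<in> IF p \<Longrightarrow> f + g \<in> IF p" by (auto simp: IF_def Fhat_add Fhat_diff Fhat_uminus)
lemma IF_uminus: "f \<in> IF p \<Longrightarrow> - f \<in> IF p" by (auto simp: IF_def Fhat_add Fhat_diff Fhat_uminus)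
lemma IF_diff: "f \<in> IF p \<Longrightarrow> g \<in> IF p \<Longrightarrow> f - g \<in> IF p" by (auto simp: IF_def Fhat_add Fhat_diff Fhat_uminus)
lemma Xt_diff: "f \<in> Xt p \<Longrightarrow> g \<in> Xt p \<Longrightarrow> f - g \<in> Xt p" by (auto simp: Xt_def Fhat_add Fhat_diff Fhat_uminus)
lemma pi0_Xt: "f \<in> Fhat \<Longrightarrow> pi0 p f \<in> Xt p"
proof -
  assume f: "f \<in> Fhat"
  have "pi0 p f \<in> Fhat" unfolding Fhat_def
  proof (intro CollectI allI)
    fix n
    have "{w. length w = n \<and> pi0 p f w \<noteq> 0} \<subseteq> {w. length w = n \<and> f w \<noteq> 0}" by (auto simp: pi0_def)
    moreover have "finite {w. length w = n \<and> f w \<noteq> 0}" using f by (simp add: Fhat_def)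
    ultimately show "finite {w. length w = n \<and> pi0 p f w \<noteq> 0}" by (rule finite_subset)
  qed
  then show ?thesis by (simp add: Xt_def pi0_def)
qed
lemma IF_pi0_rest: "f \<in> IF p \<Longrightarrow> f - pi0 p f \<in> IF (Suc p)"
proof -
  assume f: "f \<in> IF p"
  then have "pi0 p f \<in> Fhat" using pi0_Xt IF_Fhat Xt_Fhat by blast
  then have "f - pi0 p f \<in> Fhat" using f IF_Fhat Fhat_diff by blast
  then show ?thesis using f by (auto simp: IF_def pi0_def)
qed
lemma Xt_pi0: "f \<in> Xt p \<Longrightarrow> pi0 p f = f" by (auto simp: Xt_def pi0_def)
lemma pi0_diff: "pi0 p (f - g) = pi0 p f - pi0 p g" by (auto simp: pi0_def)
lemma pi0_add: "pi0 p (f + g) = pi0 p f + pi0 p g" by (auto simp: pi0_def)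
lemma pi0_IF_Suc: "f \<in> IF (Suc p) \<Longrightarrow> pi0 p f = 0" by (auto simp: pi0_def IF_def)

lemma Rge_Rhat: "r \<in> Rge p \<Longrightarrow> r \<in> Rhat" by (simp add: Rge_def)
lemma Rdeg_Rhat: "r \<in> Rdeg p \<Longrightarrow> r \<in> Rhat" by (simp add: Rdeg_def)
lemma Rdeg_Rge: "r \<in> Rdeg p \<Longrightarrow> r \<in> Rge p" by (auto simp: Rdeg_def Rge_def)
lemma rdeg_ge2: "rdeg b \<ge> 2" by (simp add: rdeg_def)
lemma Rge_le2: fixes r :: "('x,'q) rser" assumes "r \<in> Rhat" "p \<le> 2" shows "r \<in> Rge p"
proof -
  have "\<not> rdeg b < p" for b using rdeg_ge2[of b] assms(2) by linarith
  then show ?thesis using assms(1) unfolding Rge_def by blast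
qed

lemma pi1_Rdeg: assumes "r \<in> Rhat" shows "pi1 p r \<in> Rdeg p"
proof -
  have "pi1 p r \<in> Rhat" unfolding Rhat_def
  proof (intro CollectI allI)
    fix n
    have "{b. rdeg b = n \<and> pi1 p r b \<noteq> 0} \<subseteq> {b. rdeg b = n \<and> r b \<noteq> 0}" by (auto simp: pi1_def)
    moreover have "finite {b. rdeg b = n \<and> r b \<noteq> 0}" using assms by (simp add: Rhat_def)
    ultimately show "finite {b. rdeg b = n \<and> pi1 p r b \<noteq> 0}" by (rule finite_subset)
  qed
  then show ?thesis by (simp add: Rdeg_def pi1_def)
qed
lemma Rdeg_pi1: "r \<in> Rdeg p \<Longrightarrow> pi1 p r = r" by (auto simp: Rdeg_def pi1_def)
lemma Rge_rest: "r \<in> Rge p \<Longrightarrow> r - pi1 p r \<in> Rge (Suc p)"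
proof -
  assume r: "r \<in> Rge p"
  then have "r - pi1 p r \<in> Rhat" using pi1_Rdeg Rdeg_Rhat Rge_Rhat Rhat_diff by blast
  then show ?thesis using r by (auto simp: Rge_def pi1_def)
qed

lemma Rge_Suc_of_pi1_eq:
  assumes r: "r \<in> Rge p" and s: "s \<in> Rge p" and eq: "pi1 p r = pi1 p s"
  shows "r - s \<in> Rge (Suc p)"
proof -
  have "(r - s) b = 0" if "rdeg b < Suc p" for b
  proof (cases "rdeg b = p")
    case True
    then show ?thesis using fun_cong[OF eq, of b] by (simp add: pi1_def)
  next
    case False
    then have "rdeg b < p" using that by simp
    then show ?thesis using r s by (cases b) (simp add: Rge_def)
  qed
  then show ?thesis using r s by (simp add: Rge_def Rhat_diff)
qed
lemma Rge_diff: "r \<in> Rge p \<Longrightarrow> s \<in> Rge p \<Longrightarrow> r - s \<in> Rge p" by (auto simp: Rge_def Rhat_diff)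
lemma Rge_add: "r \<in> Rge p \<Longrightarrow> s \<in> Rge p \<Longrightarrow> r + s \<in> Rge p" by (auto simp: Rge_def Rhat_add)
lemma Rdeg_diff: "r \<in> Rdeg p \<Longrightarrow> s \<in> Rdeg p \<Longrightarrow> r - s \<in> Rdeg p" by (auto simp: Rdeg_def Rhat_diff)
lemma Rdeg_add: "r \<in> Rdeg p \<Longrightarrow> s \<in> Rdeg p \<Longrightarrow> r + s \<in> Rdeg p" by (auto simp: Rdeg_def Rhat_add)
lemma Rdeg_zero[simp]: "0 \<in> Rdeg p" by (simp add: Rdeg_def)
lemma Rge_zero[simp]: "0 \<in> Rge p" by (simp add: Rge_def)

lemma fsub_eq[simp]: "fsub f g = f - g" by (auto simp: fsub_def fun_eq_iff)
lemma fzero_eq[simp]: "fzero = 0" by (auto simp: fzero_def fun_eq_iff)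
lemma fadd_eq[simp]: "fadd f g = f + g" by (auto simp: fadd_def fun_eq_iff)

lemma lmul_Rge: assumes a: "a \<in> IF j" and r: "r \<in> Rge k" shows "lmul a r \<in> Rge (j+k)"
proof -
  have "lmul a r \<in> Rhat" using Rhat_lmul[OF IF_Fhat[OF a] Rge_Rhat[OF r]] .
  moreover have "lmul a r b = 0" if "rdeg b < j + k" for b
  proof -
    obtain u q v where b: "b = (u,q,v)" by (cases b)
    have "a a' * r (b',q,v) = 0" if "(a',b') \<in> splits2 u" for a' b'
    proof (cases "length a' < j")
      case True then show ?thesis using a by (simp add: IF_def)
    next
      case False
      then have "rdeg (b',q,v) < k" using that \<open>rdeg b < j + k\<close> by (auto simp: b splits2_def rdeg_def)
      then show ?thesis using r by (simp add: Rge_def)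
    qed
    then show ?thesis by (simp add: b lmul_apply split_def) (rule sum.neutral, auto)
  qed
  ultimately show ?thesis by (simp add: Rge_def)
qed

lemma rmul_Rge: assumes g: "g \<in> IF j" and r: "r \<in> Rge k" shows "rmul r g \<in> Rge (k+j)"
proof -
  have "rmul r g \<in> Rhat" using Rhat_rmul[OF IF_Fhat[OF g] Rge_Rhat[OF r]] .
  moreover have "rmul r g b = 0" if "rdeg b < k + j" for b
  proof -
    obtain u q v where b: "b = (u,q,v)" by (cases b)
    have "r (u,q,c) * g d = 0" if "(c,d) \<in> splits2 v" for c d
    proof (cases "length d < j")
      case True then show ?thesis using g by (simp add: IF_def)
    next
      case False
      then have "rdeg (u,q,c) < k" using that \<open>rdeg b < k + j\<close> by (auto simp: b splits2_def rdeg_def)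
      then show ?thesis using r by (simp add: Rge_def)
    qed
    then show ?thesis by (simp add: b rmul_apply split_def) (rule sum.neutral, auto)
  qed
  ultimately show ?thesis by (simp add: Rge_def)
qed

lemma pi1_lmul: fixes r :: "('x,'q) rser" assumes a: "a \<in> IF j" and r: "r \<in> Rge k"
  shows "pi1 (j+k) (lmul a r) = lmul (pi0 j a) (pi1 k r)"
proof
  fix b :: "'x list \<times> 'q \<times> 'x list"
  obtain u q v where b: "b = (u,q,v)" by (cases b)
  show "pi1 (j+k) (lmul a r) b = lmul (pi0 j a) (pi1 k r) b"
  proof (cases "rdeg b = j + k")
    case True
    have "a a' * r (b',q,v) = pi0 j a a' * pi1 k r (b',q,v)" if "(a',b') \<in> splits2 u" for a' b'
    proof (cases "length a' = j")
      case True
      then have "rdeg (b',q,v) = k" using that \<open>rdeg b = j + k\<close> by (auto simp: b splits2_def rdeg_def)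
      then show ?thesis using True by (simp add: pi0_def pi1_def)
    next
      case False
      show ?thesis
      proof (cases "length a' < j")
        case True then show ?thesis using a by (simp add: IF_def pi0_def)
      next
        case False': False
        then have "rdeg (b',q,v) < k" using that \<open>rdeg b = j + k\<close> False by (auto simp: b splits2_def rdeg_def)
        then show ?thesis using r False by (simp add: Rge_def pi0_def)
      qed
    qed
    then show ?thesis using True by (simp add: b lmul_apply pi1_def split_def)
  next
    case False
    have "pi0 j a a' * pi1 k r (b',q,v) = 0" if "(a',b') \<in> splits2 u" for a' b'
      using that False by (auto simp: b splits2_def rdeg_def pi0_def pi1_def)
    then show ?thesis using False by (simp add: b lmul_apply pi1_def split_def) (rule sum.neutral, force)
  qed
qed

lemma pi1_rmul: fixes r :: "('x,'q) rser" assumes g: "g \<in> IF j" and r: "r \<in> Rge k"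
  shows "pi1 (k+j) (rmul r g) = rmul (pi1 k r) (pi0 j g)"
proof
  fix b :: "'x list \<times> 'q \<times> 'x list"
  obtain u q v where b: "b = (u,q,v)" by (cases b)
  show "pi1 (k+j) (rmul r g) b = rmul (pi1 k r) (pi0 j g) b"
  proof (cases "rdeg b = k + j")
    case True
    have "r (u,q,c) * g d = pi1 k r (u,q,c) * pi0 j g d" if "(c,d) \<in> splits2 v" for c d
    proof (cases "length d = j")
      case True
      then have "rdeg (u,q,c) = k" using that \<open>rdeg b = k + j\<close> by (auto simp: b splits2_def rdeg_def)
      then show ?thesis using True by (simp add: pi0_def pi1_def)
    next
      case False
      show ?thesis
      proof (cases "length d < j")
        case True then show ?thesis using g by (simp add: IF_def pi0_def)
      next
        case False': False
        then have "rdeg (u,q,c) < k" using that \<open>rdeg b = k + j\<close> False by (auto simp: b splits2_def rdeg_def)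
        then show ?thesis using r False by (simp add: Rge_def pi0_def)
      qed
    qed
    then show ?thesis using True by (simp add: b rmul_apply pi1_def split_def)
  next
    case False
    have "pi1 k r (u,q,c) * pi0 j g d = 0" if "(c,d) \<in> splits2 v" for c d
      using that False by (auto simp: b splits2_def rdeg_def pi0_def pi1_def)
    then show ?thesis using False by (simp add: b rmul_apply pi1_def split_def) (rule sum.neutral, force)
  qed
qed

lemma pi0_fmul: assumes f: "f \<in> IF k" and g: "g \<in> IF j"
  shows "pi0 (k+j) (fmul f g) = fmul (pi0 k f) (pi0 j g)"
proof
  fix w
  show "pi0 (k+j) (fmul f g) w = fmul (pi0 k f) (pi0 j g) w"
  proof (cases "length w = k + j")
    case True
    have "f a * g d = pi0 k f a * pi0 j g d" if "(a,d) \<in> splits2 w" for a d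
    proof (cases "length a = k")
      case True
      then have "length d = j" using that \<open>length w = k + j\<close> by (auto simp: splits2_def)
      then show ?thesis using True by (simp add: pi0_def)
    next
      case False
      show ?thesis
      proof (cases "length a < k")
        case True then show ?thesis using f by (simp add: IF_def pi0_def)
      next
        case False': False
        then have "length d < j" using that \<open>length w = k + j\<close> False by (auto simp: splits2_def)
        then show ?thesis using g False by (simp add: IF_def pi0_def)
      qed
    qed
    then show ?thesis using True by (simp add: fmul_splits2 pi0_def split_def)
  next
    case False
    have "pi0 k f a * pi0 j g d = 0" if "(a,d) \<in> splits2 w" for a d
      using that False by (auto simp: splits2_def pi0_def)
    then show ?thesis using False by (simp add: fmul_splits2 pi0_def split_def) (rule sum.neutral, force)
  qed
qed


lemma sum_single: assumes "finite A" "pz \<in> A" "\<And>p. p \<in> A \<Longrightarrow> p \<noteq> pz \<Longrightarrow> g p = 0"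
  shows "sum g A = g pz"
proof -
  have "sum g A = g pz + sum g (A - {pz})" using assms(1,2) by (rule sum.remove)
  moreover have "sum g (A - {pz}) = 0" using assms(3) by (intro sum.neutral) auto
  ultimately show ?thesis by simp
qed


lemma fmul_zero_right[simp]: "fmul f 0 = 0" by (simp add: fmul_def fun_eq_iff)
lemma fmul_zero_left[simp]: "fmul 0 g = 0" by (simp add: fmul_def fun_eq_iff)
lemma fmul_add_left: "fmul (f1 + f2) g = fmul f1 g + fmul f2 g"
  by (simp add: fmul_def fun_eq_iff distrib_right sum.distrib)
lemma fmul_smult_left: "fmul (\<lambda>w. c * f w) g = (\<lambda>w. c * fmul f g w)"
  by (simp add: fmul_def fun_eq_iff sum_distrib_left mult.assoc)
definition delta :: "'x list \<Rightarrow> 'x ser" where "delta w0 = (\<lambda>w. if w = w0 then 1 else 0)"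

lemma delta_Xt: "delta w0 \<in> Xt (length w0)"
proof -
  have "delta w0 \<in> Fhat" unfolding Fhat_def
  proof (intro CollectI allI)
    fix n show "finite {w. length w = n \<and> delta w0 w \<noteq> 0}"
      by (rule finite_subset[of _ "{w0}"]) (auto simp: delta_def)
  qed
  then show ?thesis by (auto simp: Xt_def delta_def)
qed

lemma fmul_delta_nil_left[simp]: "fmul (delta []) f = f"
proof
  fix w
  have "(\<Sum>p\<in>splits2 w. delta [] (fst p) * f (snd p)) = delta [] (fst (take 0 w,w)) * f (snd (take 0 w,w))"
    by (rule sum_single[where pz="(take 0 w,w)"]) (simp, auto simp: splits2_def delta_def)
  then show "fmul (delta []) f w = f w" by (simp add: fmul_splits2 split_def delta_def)
qed

lemma fmul_delta_nil_right[simp]: "fmul f (delta []) = f"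
proof
  fix w
  have "(\<Sum>p\<in>splits2 w. f (fst p) * delta [] (snd p)) = f (fst (w,take 0 w)) * delta [] (snd (w,take 0 w))"
    by (rule sum_single[where pz="(w,take 0 w)"]) (simp, auto simp: splits2_def delta_def)
  then show "fmul f (delta []) w = f w" by (simp add: fmul_splits2 split_def delta_def)
qed

lemma fmul_delta_right_snoc: "fmul f (delta [x]) (w @ [x']) = (if x = x' then f w else 0)"
proof -
  have "(\<Sum>p\<in>splits2 (w @ [x']). f (fst p) * delta [x] (snd p)) = f (fst (w,[x'])) * delta [x] (snd (w,[x']))"
  proof (rule sum_single[where pz="(w,[x'])"])
    fix p assume p: "p \<in> splits2 (w @ [x'])" "p \<noteq> (w,[x'])"
    obtain a b where ab: "p = (a,b)" by (cases p)
    show "f (fst p) * delta [x] (snd p) = 0"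
    proof (cases "b = [x]")
      case True
      then have "a = w" "x = x'" using p ab by (auto simp: splits2_def)
      then show ?thesis using p ab True by auto
    qed (simp add: ab delta_def)
  qed (simp, simp add: splits2_def)
  then show ?thesis by (simp add: fmul_splits2 split_def delta_def)
qed

lemma fmul_delta_left_cons: "fmul (delta [x]) f (x' # w) = (if x = x' then f w else 0)"
proof -
  have "(\<Sum>p\<in>splits2 (x' # w). delta [x] (fst p) * f (snd p)) = delta [x] (fst ([x'],w)) * f (snd ([x'],w))"
  proof (rule sum_single[where pz="([x'],w)"])
    fix p assume p: "p \<in> splits2 (x' # w)" "p \<noteq> ([x'],w)"
    obtain a b where ab: "p = (a,b)" by (cases p)
    show "delta [x] (fst p) * f (snd p) = 0"
    proof (cases "a = [x]")
      case True
      then have "b = w" "x = x'" using p ab by (auto simp: splits2_def)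
      then show ?thesis using p ab True by auto
    qed (simp add: ab delta_def)
  qed (simp, simp add: splits2_def)
  then show ?thesis by (simp add: fmul_splits2 split_def delta_def)
qed

lemma lmul_add: "lmul a (r1 + r2) = lmul a r1 + lmul a r2"
  by (simp add: lmul_def fun_eq_iff distrib_left sum.distrib split_def)
lemma lmul_uminus: "lmul a (- r) = - lmul a r"
  by (simp add: lmul_def fun_eq_iff sum_negf split_def)
lemma lmul_diff: "lmul a (r1 - r2) = lmul a r1 - lmul a r2"
  using lmul_add[of a r1 "- r2"] lmul_uminus[of a r2] by simp
lemma pi1_add: "pi1 p (r1 + r2) = pi1 p r1 + pi1 p r2" by (auto simp: pi1_def fun_eq_iff)
lemma pi1_smult: "pi1 p (\<lambda>b. c * r b) = (\<lambda>b. c * pi1 p r b)" by (auto simp: pi1_def fun_eq_iff)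
lemma pi1_diff: "pi1 p (r1 - r2) = pi1 p r1 - pi1 p r2" by (auto simp: pi1_def fun_eq_iff)
lemma Rge_smult: "r \<in> Rge p \<Longrightarrow> (\<lambda>b. c * r b) \<in> Rge p" by (auto simp: Rge_def Rhat_smult)
lemma Rdeg_smult: "r \<in> Rdeg p \<Longrightarrow> (\<lambda>b. c * r b) \<in> Rdeg p" by (auto simp: Rdeg_def Rhat_smult)
lemma dA_add: "r1 \<in> Rhat \<Longrightarrow> r2 \<in> Rhat \<Longrightarrow> dA y p (r1 + r2) = dA y p r1 + dA y p r2"
  by (simp add: dA_def dK_add pi0_add)
lemma dA_smult: "r \<in> Rhat \<Longrightarrow> dA y p (\<lambda>b. c * r b) = (\<lambda>w. c * dA y p r w)"
  by (simp add: dA_def dK_smult pi0_def fun_eq_iff)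
lemma dA_diff: "r1 \<in> Rhat \<Longrightarrow> r2 \<in> Rhat \<Longrightarrow> dA y p (r1 - r2) = dA y p r1 - dA y p r2"
  by (simp add: dA_def dK_diff pi0_diff)
lemma dA_zero[simp]: "dA y p 0 = 0" by (simp add: dA_def pi0_def fun_eq_iff)
lemma dA_sum: "(\<And>i. i \<in> I \<Longrightarrow> F i \<in> Rhat) \<Longrightarrow> dA y p (sum F I) = (\<Sum>i\<in>I. dA y p (F i))"
proof (induction I rule: infinite_finite_induct)
  case (insert i I)
  have "dA y p (F i + sum F I) = dA y p (F i) + dA y p (sum F I)" using insert by (intro dA_add Rhat_sum) auto
  moreover have "dA y p (sum F I) = (\<Sum>i\<in>I. dA y p (F i))" using insert by simp
  ultimately show ?case by (simp only: sum.insert[OF insert(1,2)])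
qed auto

lemma kerA_diff: assumes "r \<in> kerA y p" "s \<in> kerA y p" shows "r - s \<in> kerA y p"
  using assms by (auto simp: kerA_def Rdeg_diff dA_diff[OF Rdeg_Rhat Rdeg_Rhat])

lemma kerK_zero[simp]: "0 \<in> kerK y p" by (simp add: kerK_def)

lemma lmul_Rdeg: assumes a: "a \<in> Xt j" and r: "r \<in> Rdeg k" shows "lmul a r \<in> Rdeg (j+k)"
proof -
  have "pi1 (j+k) (lmul a r) = lmul a r"
    using pi1_lmul[OF Xt_IF[OF a] Rdeg_Rge[OF r]] Xt_pi0[OF a] Rdeg_pi1[OF r] by simp
  moreover have "pi1 (j+k) (lmul a r) \<in> Rdeg (j+k)"
    using pi1_Rdeg Rge_Rhat lmul_Rge[OF Xt_IF[OF a] Rdeg_Rge[OF r]] by blast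
  ultimately show ?thesis by simp
qed

lemma rmul_Rdeg: assumes g: "g \<in> Xt j" and r: "r \<in> Rdeg k" shows "rmul r g \<in> Rdeg (k+j)"
proof -
  have "pi1 (k+j) (rmul r g) = rmul r g"
    using pi1_rmul[OF Xt_IF[OF g] Rdeg_Rge[OF r]] Xt_pi0[OF g] Rdeg_pi1[OF r] by simp
  moreover have "pi1 (k+j) (rmul r g) \<in> Rdeg (k+j)"
    using pi1_Rdeg Rge_Rhat rmul_Rge[OF Xt_IF[OF g] Rdeg_Rge[OF r]] by blast
  ultimately show ?thesis by simp
qed

lemma rmul_delta_snoc: "rmul r (delta [x]) (u,q,v@[x']) = (if x = x' then r (u,q,v) else 0)"
proof -
  have "(\<Sum>p\<in>splits2 (v @ [x']). r (u,q,fst p) * delta [x] (snd p)) = r (u,q,fst (v,[x'])) * delta [x] (snd (v,[x']))"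
  proof (rule sum_single[where pz="(v,[x'])"])
    fix p assume p: "p \<in> splits2 (v @ [x'])" "p \<noteq> (v,[x'])"
    obtain a b where ab: "p = (a,b)" by (cases p)
    show "r (u,q,fst p) * delta [x] (snd p) = 0"
    proof (cases "b = [x]")
      case True
      then have "a = v" "x = x'" using p ab by (auto simp: splits2_def)
      then show ?thesis using p ab True by auto
    qed (simp add: ab delta_def)
  qed (simp, simp add: splits2_def)
  then show ?thesis by (simp add: rmul_apply split_def delta_def)
qed

lemma rmul_delta_nil: "rmul r (delta [x]) (u,q,[]) = 0"
  by (simp add: rmul_apply splits2_def delta_def)

lemma lmul_delta_cons: "lmul (delta [x]) r (x'#u,q,v) = (if x = x' then r (u,q,v) else 0)"
proof -
  have "(\<Sum>p\<in>splits2 (x' # u). delta [x] (fst p) * r (snd p,q,v)) = delta [x] (fst ([x'],u)) * r (snd ([x'],u),q,v)"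
  proof (rule sum_single[where pz="([x'],u)"])
    fix p assume p: "p \<in> splits2 (x' # u)" "p \<noteq> ([x'],u)"
    obtain a b where ab: "p = (a,b)" by (cases p)
    show "delta [x] (fst p) * r (snd p,q,v) = 0"
    proof (cases "a = [x]")
      case True
      then have "b = u" "x = x'" using p ab by (auto simp: splits2_def)
      then show ?thesis using p ab True by auto
    qed (simp add: ab delta_def)
  qed (simp, simp add: splits2_def)
  then show ?thesis by (simp add: lmul_apply split_def delta_def)
qed

lemma lmul_delta_nil: "lmul (delta [x]) r ([],q,v) = 0"
  by (simp add: lmul_apply splits2_def delta_def)

definition strip_right :: "('x,'q) rser \<Rightarrow> 'x \<Rightarrow> ('x,'q) rser" where
  "strip_right r x = (\<lambda>(u,q,v). r (u,q,v@[x]))"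
definition right_empty_part :: "('x,'q) rser \<Rightarrow> ('x,'q) rser" where
  "right_empty_part r = (\<lambda>(u,q,v). if v = [] then r (u,q,v) else 0)"
definition strip_left :: "('x,'q) rser \<Rightarrow> 'x \<Rightarrow> ('x,'q) rser" where
  "strip_left r x = (\<lambda>(u,q,v). r (x#u,q,v))"
definition left_empty_part :: "('x,'q) rser \<Rightarrow> ('x,'q) rser" where
  "left_empty_part r = (\<lambda>(u,q,v). if u = [] then r (u,q,v) else 0)"

lemma right_letter_decomp: assumes fin: "finite (UNIV :: 'x set)"
  shows "(r :: ('x,'q) rser) = right_empty_part r + (\<Sum>x\<in>UNIV. rmul (strip_right r x) (delta [x]))"
proof
  fix b :: "'x list \<times> 'q \<times> 'x list"
  obtain u q v where b: "b = (u,q,v)" by (cases b)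
  show "r b = (right_empty_part r + (\<Sum>x\<in>UNIV. rmul (strip_right r x) (delta [x]))) b"
  proof (cases v rule: rev_exhaust)
    case Nil then show ?thesis by (simp add: b right_empty_part_def sum_fun_apply rmul_delta_nil)
  next
    case (snoc v' x')
    have "(\<Sum>x\<in>UNIV. rmul (strip_right r x) (delta [x]) (u,q,v'@[x'])) = (\<Sum>x\<in>UNIV. if x = x' then r (u,q,v'@[x']) else 0)"
      by (rule sum.cong) (auto simp: rmul_delta_snoc strip_right_def)
    also have "\<dots> = r (u,q,v'@[x'])" using fin by simp
    finally show ?thesis by (simp add: b snoc right_empty_part_def sum_fun_apply)
  qed
qed

lemma left_letter_decomp: assumes fin: "finite (UNIV :: 'x set)"
  shows "(r :: ('x,'q) rser) = left_empty_part r + (\<Sum>x\<in>UNIV. lmul (delta [x]) (strip_left r x))"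
proof
  fix b :: "'x list \<times> 'q \<times> 'x list"
  obtain u q v where b: "b = (u,q,v)" by (cases b)
  show "r b = (left_empty_part r + (\<Sum>x\<in>UNIV. lmul (delta [x]) (strip_left r x))) b"
  proof (cases u)
    case Nil then show ?thesis by (simp add: b left_empty_part_def sum_fun_apply lmul_delta_nil)
  next
    case (Cons x' u')
    have "(\<Sum>x\<in>UNIV. lmul (delta [x]) (strip_left r x) (x'#u',q,v)) = (\<Sum>x\<in>UNIV. if x = x' then r (x'#u',q,v) else 0)"
      by (rule sum.cong) (auto simp: lmul_delta_cons strip_left_def)
    also have "\<dots> = r (x'#u',q,v)" using fin by simp
    finally show ?thesis by (simp add: b Cons left_empty_part_def sum_fun_apply)
  qed
qed

lemma strip_right_Rdeg: assumes r: "r \<in> Rdeg (Suc k)" shows "strip_right r x \<in> Rdeg k"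
proof -
  let ?f = "\<lambda>(u::'a list,q::'b,v). (u,q,v@[x])"
  have inj: "inj ?f" by (auto simp: inj_def)
  have "strip_right r x \<in> Rhat" unfolding Rhat_def
  proof (intro CollectI allI)
    fix n
    have "{b. rdeg b = n \<and> strip_right r x b \<noteq> 0} \<subseteq> ?f -` {b. rdeg b = Suc n \<and> r b \<noteq> 0}"
      by (auto simp: strip_right_def rdeg_def)
    moreover have "finite (?f -` {b. rdeg b = Suc n \<and> r b \<noteq> 0})"
      using r inj by (intro finite_vimageI) (auto simp: Rdeg_def Rhat_def)
    ultimately show "finite {b. rdeg b = n \<and> strip_right r x b \<noteq> 0}" by (rule finite_subset)
  qed
  moreover have "strip_right r x b = 0" if "rdeg b \<noteq> k" for b
    using r that by (cases b) (auto simp: strip_right_def Rdeg_def rdeg_def)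
  ultimately show ?thesis by (simp add: Rdeg_def)
qed

lemma strip_left_Rdeg: assumes r: "r \<in> Rdeg (Suc k)" shows "strip_left r x \<in> Rdeg k"
proof -
  let ?f = "\<lambda>(u::'a list,q::'b,v). (x#u,q,v)"
  have inj: "inj ?f" by (auto simp: inj_def)
  have "strip_left r x \<in> Rhat" unfolding Rhat_def
  proof (intro CollectI allI)
    fix n
    have "{b. rdeg b = n \<and> strip_left r x b \<noteq> 0} \<subseteq> ?f -` {b. rdeg b = Suc n \<and> r b \<noteq> 0}"
      by (auto simp: strip_left_def rdeg_def)
    moreover have "finite (?f -` {b. rdeg b = Suc n \<and> r b \<noteq> 0})"
      using r inj by (intro finite_vimageI) (auto simp: Rdeg_def Rhat_def)
    ultimately show "finite {b. rdeg b = n \<and> strip_left r x b \<noteq> 0}" by (rule finite_subset)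
  qed
  moreover have "strip_left r x b = 0" if "rdeg b \<noteq> k" for b
    using r that by (cases b) (auto simp: strip_left_def Rdeg_def rdeg_def)
  ultimately show ?thesis by (simp add: Rdeg_def)
qed

lemma right_empty_part_Rdeg: assumes r: "r \<in> Rdeg p" shows "right_empty_part r \<in> Rdeg p"
proof -
  have "right_empty_part r \<in> Rhat" unfolding Rhat_def
  proof (intro CollectI allI)
    fix n
    have "{b. rdeg b = n \<and> right_empty_part r b \<noteq> 0} \<subseteq> {b. rdeg b = n \<and> r b \<noteq> 0}"
      by (auto simp: right_empty_part_def split: if_splits)
    moreover have "finite {b. rdeg b = n \<and> r b \<noteq> 0}" using r by (simp add: Rdeg_def Rhat_def)
    ultimately show "finite {b. rdeg b = n \<and> right_empty_part r b \<noteq> 0}" by (rule finite_subset)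
  qed
  then show ?thesis using r by (auto simp: Rdeg_def right_empty_part_def)
qed


definition right_nonempty :: "('x,'q) rser \<Rightarrow> bool" where "right_nonempty r = (\<forall>u q. r (u,q,[]) = 0)"

lemma Rdeg_lt2_eq_0: fixes r :: "('x,'q) rser" assumes "r \<in> Rdeg p" "p < 2" shows "r = 0"
proof
  fix b :: "'x list \<times> 'q \<times> 'x list"
  have "rdeg b \<noteq> p" using assms(2) rdeg_ge2[of b] by linarith
  then show "r b = 0 b" using assms(1) by (cases b) (auto simp: Rdeg_def)
qed

lemma sum_delta_eval_cons: fixes F :: "'x \<Rightarrow> 'x ser" assumes fin: "finite (UNIV :: 'x set)"
  shows "(\<Sum>x\<in>UNIV. fmul (delta [x]) (F x)) (x' # w) = F x' w"
proof -
  have "(\<Sum>x\<in>UNIV. fmul (delta [x]) (F x)) (x' # w) = (\<Sum>x\<in>UNIV. fmul (delta [x]) (F x) (x' # w))"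
    by (simp add: sum_fun_apply)
  also have "\<dots> = (\<Sum>x\<in>UNIV. if x = x' then F x' w else 0)"
    by (rule sum.cong) (auto simp: fmul_delta_left_cons)
  also have "\<dots> = F x' w" by (subst sum.delta[OF fin]) simp
  finally show ?thesis .
qed

lemma sum_delta_eval_snoc: fixes F :: "'x \<Rightarrow> 'x ser" assumes fin: "finite (UNIV :: 'x set)"
  shows "(\<Sum>x\<in>UNIV. fmul (F x) (delta [x])) (w @ [x']) = F x' w"
proof -
  have "(\<Sum>x\<in>UNIV. fmul (F x) (delta [x])) (w @ [x']) = (\<Sum>x\<in>UNIV. fmul (F x) (delta [x]) (w @ [x']))"
    by (simp add: sum_fun_apply)
  also have "\<dots> = (\<Sum>x\<in>UNIV. if x = x' then F x' w else 0)"
    by (rule sum.cong) (auto simp: fmul_delta_right_snoc)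
  also have "\<dots> = F x' w" by (subst sum.delta[OF fin]) simp
  finally show ?thesis .
qed

lemma sum_lessThan_split: fixes a b :: nat and h :: "nat \<Rightarrow> 'a::comm_monoid_add" shows "(\<Sum>i<a+b. h i) = (\<Sum>i<a. h i) + (\<Sum>i<b. h (a+i))"
  by (induction b) (simp_all add: add.assoc)

lemma lspan_induct[consumes 1, case_names zero add smult base]:
  assumes f: "f \<in> lspan S" and z: "P 0"
    and add: "\<And>f g. P f \<Longrightarrow> P g \<Longrightarrow> P (f + g)"
    and sm: "\<And>c f. P f \<Longrightarrow> P (\<lambda>w. c * f w)"
    and base: "\<And>s. s \<in> S \<Longrightarrow> P s"
  shows "P f"
proof -
  obtain n and c :: "nat \<Rightarrow> rat" and s where s: "\<forall>i<n. s i \<in> S" and fe: "f = (\<lambda>w. \<Sum>i<n. c i * s i w)"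
    using f by (auto simp: lspan_def)
  have "\<forall>m\<le>n. P (\<lambda>w. \<Sum>i<m. c i * s i w)"
  proof (intro allI impI)
    fix m assume "m \<le> n" then show "P (\<lambda>w. \<Sum>i<m. c i * s i w)"
    proof (induction m)
      case 0
      have "(\<lambda>w. \<Sum>i<0. c i * s i w) = 0" by (simp add: fun_eq_iff)
      then show ?case using z by simp
    next
      case (Suc m)
      have "(\<lambda>w. \<Sum>i<Suc m. c i * s i w) = (\<lambda>w. \<Sum>i<m. c i * s i w) + (\<lambda>w. c m * s m w)"
        by (simp add: fun_eq_iff)
      moreover have "P (\<lambda>w. c m * s m w)" using sm base s Suc.prems by simp
      ultimately show ?case using add Suc by simp
    qed
  qed
  then show ?thesis using fe by simp
qed

lemma lspan_base: "s \<in> S \<Longrightarrow> s \<in> lspan S"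
  unfolding lspan_def by (rule CollectI, rule exI[of _ 1], rule exI[of _ "\<lambda>_. 1"], rule exI[of _ "\<lambda>_. s"]) auto

lemma lspan_zero: "0 \<in> lspan S"
  unfolding lspan_def by (rule CollectI, rule exI[of _ 0]) (auto simp: fun_eq_iff)

lemma lspan_add: assumes "f \<in> lspan S" "g \<in> lspan S" shows "f + g \<in> lspan S"
proof -
  obtain n1 and c1 :: "nat \<Rightarrow> rat" and s1 where 1: "\<forall>i<n1. s1 i \<in> S" "f = (\<lambda>w. \<Sum>i<n1. c1 i * s1 i w)"
    using assms(1) by (auto simp: lspan_def)
  obtain n2 and c2 :: "nat \<Rightarrow> rat" and s2 where 2: "\<forall>i<n2. s2 i \<in> S" "g = (\<lambda>w. \<Sum>i<n2. c2 i * s2 i w)"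
    using assms(2) by (auto simp: lspan_def)
  let ?c = "\<lambda>i. if i < n1 then c1 i else c2 (i - n1)"
  let ?s = "\<lambda>i. if i < n1 then s1 i else s2 (i - n1)"
  have "\<forall>i<n1+n2. ?s i \<in> S" using 1 2 by auto
  moreover have "f + g = (\<lambda>w. \<Sum>i<n1+n2. ?c i * ?s i w)"
  proof
    fix w
    have a: "(\<Sum>i<n1. ?c i * ?s i w) = (\<Sum>i<n1. c1 i * s1 i w)" by (rule sum.cong) auto
    have b: "(\<Sum>i<n2. ?c (n1+i) * ?s (n1+i) w) = (\<Sum>i<n2. c2 i * s2 i w)" by (rule sum.cong) auto
    show "(f + g) w = (\<Sum>i<n1+n2. ?c i * ?s i w)"
      unfolding sum_lessThan_split[where a=n1 and b=n2] a b using 1(2) 2(2) by simp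
  qed
  ultimately have "(\<forall>i<n1+n2. ?s i \<in> S) \<and> f + g = (\<lambda>w. \<Sum>i<n1+n2. ?c i * ?s i w)" by (rule conjI)
  then show ?thesis unfolding lspan_def mem_Collect_eq
    by (rule exI[where x="n1+n2", OF exI[where x="?c", OF exI[where x="?s"]]])
qed

lemma lspan_smult: assumes "f \<in> lspan S" shows "(\<lambda>w. c * f w) \<in> lspan S"
proof -
  obtain n and c1 :: "nat \<Rightarrow> rat" and s1 where 1: "\<forall>i<n. s1 i \<in> S" "f = (\<lambda>w. \<Sum>i<n. c1 i * s1 i w)"
    using assms(1) by (auto simp: lspan_def)
  have "(\<lambda>w. c * f w) = (\<lambda>w. \<Sum>i<n. (c * c1 i) * s1 i w)"
    using 1 by (simp add: fun_eq_iff sum_distrib_left mult.assoc)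
  with 1(1) have "(\<forall>i<n. s1 i \<in> S) \<and> (\<lambda>w. c * f w) = (\<lambda>w. \<Sum>i<n. (c * c1 i) * s1 i w)" by (rule conjI)
  then show ?thesis unfolding lspan_def mem_Collect_eq
    by (rule exI[where x=n, OF exI[where x="\<lambda>i. c * c1 i", OF exI[where x=s1]]])
qed

lemma lspan_uminus: assumes "f \<in> lspan S" shows "- f \<in> lspan S"
proof -
  have "- f = (\<lambda>w. (-1) * f w)" by auto
  then show ?thesis using lspan_smult[OF assms, of "-1"] by simp
qed

lemma lspan_sum: "(\<And>i. i \<in> I \<Longrightarrow> F i \<in> lspan S) \<Longrightarrow> sum F I \<in> lspan S"
proof (induction I rule: infinite_finite_induct)
  case (insert i I)
  have "sum F (insert i I) = F i + sum F I" using insert(1,2) by (rule sum.insert)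
  then show ?case using insert lspan_add by (metis insertCI)
qed (simp_all add: lspan_zero)

lemma tens_gen: "s \<in> S \<Longrightarrow> t \<in> T \<Longrightarrow> fmul s t \<in> tens S T"
  unfolding tens_def by (rule lspan_base) blast

lemma tens_sum: "(\<And>i. i \<in> I \<Longrightarrow> F i \<in> tens S T) \<Longrightarrow> sum F I \<in> tens S T"
  unfolding tens_def by (rule lspan_sum)

lemma tens_uminus: "f \<in> tens S T \<Longrightarrow> - f \<in> tens S T"
  unfolding tens_def by (rule lspan_uminus)

lemma tens_induct[consumes 1, case_names zero add smult base]:
  assumes f: "f \<in> tens S T" and z: "P 0"
    and add: "\<And>f g. P f \<Longrightarrow> P g \<Longrightarrow> P (f + g)"
    and sm: "\<And>c f. P f \<Longrightarrow> P (\<lambda>w. c * f w)"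
    and base: "\<And>s t. s \<in> S \<Longrightarrow> t \<in> T \<Longrightarrow> P (fmul s t)"
  shows "P f"
  using f unfolding tens_def
  by (rule lspan_induct) (use z[unfolded zero_fun_def] add[unfolded plus_fun_def] sm base in auto)


definition right_len :: "nat \<Rightarrow> ('x,'q) rser \<Rightarrow> bool" where
  "right_len j r = (\<forall>u q v. r (u,q,v) \<noteq> 0 \<longrightarrow> length v = j)"

lemma right_len_zero[simp]: "right_len j 0" by (simp add: right_len_def)
lemma right_len_add: assumes "right_len j r1" "right_len j r2" shows "right_len j (r1 + r2)"
  unfolding right_len_def
proof (intro allI impI)
  fix u q v assume "(r1 + r2) (u,q,v) \<noteq> 0"
  then have "r1 (u,q,v) \<noteq> 0 \<or> r2 (u,q,v) \<noteq> 0" by auto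
  then show "length v = j" using assms unfolding right_len_def by blast
qed
lemma right_len_smult: "right_len j r \<Longrightarrow> right_len j (\<lambda>b. c * r b)"
  unfolding right_len_def by auto
lemma right_len_uminus: "right_len j r \<Longrightarrow> right_len j (- r)"
  unfolding right_len_def by simp
lemma right_len_diff: "right_len j r1 \<Longrightarrow> right_len j r2 \<Longrightarrow> right_len j (r1 - r2)"
  using right_len_add[of j r1 "- r2"] right_len_uminus[of j r2] by simp
lemma right_len_Suc_right_nonempty: "right_len (Suc j) r \<Longrightarrow> right_nonempty r" unfolding right_len_def right_nonempty_def by (metis Zero_not_Suc list.size(3))

lemma right_len_lmul: assumes "right_len j r" shows "right_len j (lmul a r)"
  unfolding right_len_def
proof (intro allI impI)
  fix u q v assume "lmul a r (u,q,v) \<noteq> 0"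
  then have "(\<Sum>(a',b)\<in>splits2 u. a a' * r (b,q,v)) \<noteq> 0" by (simp add: lmul_apply)
  then obtain p where "p \<in> splits2 u" "(case p of (a',b) \<Rightarrow> a a' * r (b,q,v)) \<noteq> 0" by (rule sum.not_neutral_contains_not_neutral)
  then show "length v = j" using assms by (cases p) (auto simp: right_len_def)
qed

lemma right_len_rmul: assumes "right_len 0 r" "c \<in> Xt j" shows "right_len j (rmul r c)"
  unfolding right_len_def
proof (intro allI impI)
  fix u q v assume "rmul r c (u,q,v) \<noteq> 0"
  then have "(\<Sum>(c',d)\<in>splits2 v. r (u,q,c') * c d) \<noteq> 0" by (simp add: rmul_apply)
  then obtain p where p: "p \<in> splits2 v" "(case p of (c',d) \<Rightarrow> r (u,q,c') * c d) \<noteq> 0" by (rule sum.not_neutral_contains_not_neutral)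
  obtain c' d where pd: "p = (c',d)" by (cases p)
  have "c' = []" using p assms(1) by (auto simp: pd right_len_def)
  moreover have "length d = j" using p assms(2) by (auto simp: pd Xt_def)
  ultimately show "length v = j" using p by (auto simp: pd splits2_def)
qed

lemma Rdeg2_right_len0: "r \<in> Rdeg 2 \<Longrightarrow> right_len 0 r"
  by (auto simp: right_len_def Rdeg_def rdeg_def)

lemma left_empty_part_eq_0:
  assumes r: "r \<in> Rdeg p" and r0: "right_len 0 r" and p: "p \<noteq> 2"
  shows "left_empty_part r = 0"
proof -
  have "left_empty_part r (u,q,v) = 0" for u q v
  proof (cases "v = []")
    case True
    then have "rdeg (u,q,v) \<noteq> p \<or> u \<noteq> []" using p by (auto simp: rdeg_def)
    then show ?thesis using r by (auto simp: left_empty_part_def Rdeg_def)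
  next
    case False
    then show ?thesis using r0 by (auto simp: left_empty_part_def right_len_def)
  qed
  then show ?thesis by (simp add: fun_eq_iff)
qed

definition Ybasis :: "'q \<Rightarrow> ('x,'q) rser" where
  "Ybasis q = (\<lambda>b. if b = ([],q,[]) then 1 else 0)"

lemma Ybasis_Rdeg: "Ybasis q \<in> Rdeg 2"
proof -
  have "Ybasis q \<in> Rhat" unfolding Rhat_def
  proof (intro CollectI allI)
    fix n show "finite {b. rdeg b = n \<and> Ybasis q b \<noteq> 0}"
      by (rule finite_subset[of _ "{([],q,[])}"]) (auto simp: Ybasis_def)
  qed
  then show ?thesis by (auto simp: Rdeg_def Ybasis_def rdeg_def)
qed

lemma lmul_Ybasis: "lmul g (Ybasis q) (u,q',v) = (if q' = q \<and> v = [] then g u else 0)"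
proof -
  have "(\<Sum>p\<in>splits2 u. g (fst p) * Ybasis q (snd p,q',v)) = g (fst (u,take 0 u)) * Ybasis q (snd (u,take 0 u),q',v)"
  proof (rule sum_single[where pz="(u,take 0 u)"])
    fix p assume p: "p \<in> splits2 u" "p \<noteq> (u,take 0 u)"
    obtain a b where ab: "p = (a,b)" by (cases p)
    show "g (fst p) * Ybasis q (snd p,q',v) = 0"
    proof (cases "b = []")
      case True then have "a = u" using p ab by (auto simp: splits2_def)
      then show ?thesis using p ab True by auto
    qed (simp add: ab Ybasis_def)
  qed (simp, simp add: splits2_def)
  then show ?thesis by (auto simp: lmul_apply split_def Ybasis_def)
qed

lemma right_empty_part_eq_sum_Ybasis:
  assumes sR: "s \<in> Rdeg p" and p2: "2 \<le> p"
  obtains Q g where "finite Q" "\<And>q. g q \<in> Xt (p-2)"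
    "right_empty_part s = (\<Sum>q\<in>Q. lmul (g q) (Ybasis q))"
proof
  define Q where "Q = {q. \<exists>u. s (u,q,[]) \<noteq> 0}"
  define g where "g q = (\<lambda>u. s (u,q,[]))" for q
  have "Q \<subseteq> (\<lambda>b. fst (snd b)) ` {b. rdeg b = p \<and> s b \<noteq> 0}"
  proof
    fix q assume "q \<in> Q"
    then obtain u where u: "s (u,q,[]) \<noteq> 0" by (auto simp: Q_def)
    then have "rdeg (u,q,[]) = p" using sR by (auto simp: Rdeg_def)
    then show "q \<in> (\<lambda>b. fst (snd b)) ` {b. rdeg b = p \<and> s b \<noteq> 0}"
      using u by (intro image_eqI[where x="(u,q,[])"]) auto
  qed
  moreover have "finite {b. rdeg b = p \<and> s b \<noteq> 0}" using sR by (simp add: Rdeg_def Rhat_def)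
  ultimately show finQ: "finite Q" by (meson finite_imageI finite_subset)
  show "g q \<in> Xt (p-2)" for q
  proof -
    have "finite {u. length u = n \<and> g q u \<noteq> 0}" for n
    proof (rule finite_subset)
      show "{u. length u = n \<and> g q u \<noteq> 0} \<subseteq> fst ` {b. rdeg b = n + 2 \<and> s b \<noteq> 0}"
        by (auto simp: g_def rdeg_def intro!: image_eqI[where x="(_,q,[])"])
      show "finite (fst ` {b. rdeg b = n + 2 \<and> s b \<noteq> 0})" using sR by (simp add: Rdeg_def Rhat_def)
    qed
    moreover have "g q u = 0" if "length u \<noteq> p - 2" for u
      using sR that p2 by (auto simp: g_def Rdeg_def rdeg_def)
    ultimately show ?thesis by (simp add: Xt_def Fhat_def)
  qed
  show "right_empty_part s = (\<Sum>q\<in>Q. lmul (g q) (Ybasis q))"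
  proof
    fix b :: "'a list \<times> 'b \<times> 'a list"
    obtain u q' v where b: "b = (u,q',v)" by (cases b)
    have "(\<Sum>q\<in>Q. lmul (g q) (Ybasis q)) b = (\<Sum>q\<in>Q. if q' = q \<and> v = [] then g q u else 0)"
      by (simp add: sum_fun_apply b lmul_Ybasis)
    also have "\<dots> = (if v = [] then (\<Sum>q\<in>Q. if q' = q then g q u else 0) else 0)"
      by auto
    also have "\<dots> = (if v = [] \<and> q' \<in> Q then g q' u else 0)"
      using finQ by simp
    also have "\<dots> = right_empty_part s b"
      by (auto simp: b right_empty_part_def g_def Q_def)
    finally show "right_empty_part s b = (\<Sum>q\<in>Q. lmul (g q) (Ybasis q)) b" by simp
  qed
qed

lemma Wn2_eq: "Wn y 2 = tens (tens (Xt 0) (JA y 2)) (Xt 0)"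
  by (simp add: Wn_def)

lemma Wn3_memD: assumes "z \<in> Wn y 3"
  shows "z \<in> tens (tens (Xt 0) (JA y 2)) (Xt 1)" "z \<in> tens (tens (Xt 1) (JA y 2)) (Xt 0)"
proof -
  have h: "\<forall>i\<in>{..1::nat}. z \<in> tens (tens (Xt i) (JA y 2)) (Xt (1 - i))" using assms by (simp add: Wn_def)
  have "z \<in> tens (tens (Xt 0) (JA y 2)) (Xt (1 - 0))" using bspec[OF h, where x=0] by simp
  then show "z \<in> tens (tens (Xt 0) (JA y 2)) (Xt 1)" by simp
  have "z \<in> tens (tens (Xt 1) (JA y 2)) (Xt (1 - 1))" using bspec[OF h, where x=1] by simp
  then show "z \<in> tens (tens (Xt 1) (JA y 2)) (Xt 0)" by simp
qed

lemma JA_Wn2: assumes "w \<in> JA y 2" shows "w \<in> Wn y 2"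
proof -
  have d0: "delta [] \<in> Xt 0" using delta_Xt[of "[]"] by simp
  have "fmul (delta []) w \<in> tens (Xt 0) (JA y 2)" using tens_gen[OF d0 assms] .
  then have "fmul (fmul (delta []) w) (delta []) \<in> tens (tens (Xt 0) (JA y 2)) (Xt 0)" using tens_gen d0 by blast
  then show ?thesis by (simp add: Wn2_eq)
qed

section \<open>Quadraticity\<close>

locale deg2_relations =
  fixes y :: "'q \<Rightarrow> 'x ser"
  assumes y_IF2: "\<forall>q. y q \<in> IF 2"
begin

lemma y_Fhat: "y q \<in> Fhat" using y_IF2 IF_Fhat by blast

lemma dK_Fhat: assumes r: "r \<in> Rhat" shows "dK y r \<in> Fhat"
  unfolding Fhat_def
proof (intro CollectI allI)
  fix n
  let ?B = "\<Union>k\<le>n+2. {b. rdeg b = k \<and> r b \<noteq> 0}"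
  let ?C = "Sigma ?B (\<lambda>(u,q,v). {m. length m = n - length u - length v \<and> y q m \<noteq> 0})"
  have finB: "finite ?B" using r by (auto simp: Rhat_def)
  have finC: "finite ?C"
  proof (rule finite_SigmaI[OF finB])
    fix b assume "b \<in> ?B"
    obtain u q v where b: "b = (u,q,v)" by (cases b)
    have "finite {m. length m = n - length u - length v \<and> y q m \<noteq> 0}" using y_Fhat[of q] by (simp add: Fhat_def)
    then show "finite (case b of (u,q,v) \<Rightarrow> {m. length m = n - length u - length v \<and> y q m \<noteq> 0})" by (simp add: b)
  qed
  have "{w. length w = n \<and> dK y r w \<noteq> 0} \<subseteq> (\<lambda>((u,q,v),m). u @ m @ v) ` ?C"
  proof
    fix w assume "w \<in> {w. length w = n \<and> dK y r w \<noteq> 0}"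
    then have n: "length w = n" and nz: "(\<Sum>(u,m,v)\<in>splits3 w. dK_coeff y r u v m) \<noteq> 0" by (auto simp: dK_splits3[OF r])
    from nz obtain t where t: "t \<in> splits3 w" "(case t of (u,m,v) \<Rightarrow> dK_coeff y r u v m) \<noteq> 0" by (rule sum.not_neutral_contains_not_neutral)
    obtain u m v where tt: "t = (u,m,v)" by (cases t)
    from t have w: "w = u @ m @ v" and nz2: "dK_coeff y r u v m \<noteq> 0" by (auto simp: tt splits3_def)
    from nz2 obtain q where q: "q \<in> gens_supp r u v" "r (u,q,v) * y q m \<noteq> 0" unfolding dK_coeff_def by (rule sum.not_neutral_contains_not_neutral)
    show "w \<in> (\<lambda>((u,q,v),m). u @ m @ v) ` ?C"
      using q n w by (intro image_eqI[where x="((u,q,v),m)"]) (auto simp: gens_supp_def rdeg_def)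
  qed
  then show "finite {w. length w = n \<and> dK y r w \<noteq> 0}" using finite_imageI[OF finC] by (rule finite_subset)
qed

lemma dK_IF: assumes r: "r \<in> Rge p" shows "dK y r \<in> IF p"
proof -
  have rr: "r \<in> Rhat" using r Rge_Rhat by blast
  have "dK y r w = 0" if w: "length w < p" for w
  proof -
    have "dK_coeff y r u v m = 0" if t: "(u,m,v) \<in> splits3 w" for u m v
    proof -
      have "r (u,q,v) * y q m = 0" for q
      proof (cases "r (u,q,v) = 0")
        case False
        then have "rdeg (u,q,v) \<ge> p" using r by (force simp: Rge_def)
        then have "length m < 2" using t w by (auto simp: splits3_def rdeg_def)
        then have "y q m = 0" using y_IF2 by (auto simp: IF_def)
        then show ?thesis by simp
      qed simp
      then show ?thesis unfolding dK_coeff_def by (intro sum.neutral) blast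
    qed
    then show ?thesis by (simp add: dK_splits3[OF rr] split_def)
  qed
  then show ?thesis using dK_Fhat[OF rr] by (simp add: IF_def)
qed

lemma dK_pi: assumes r: "r \<in> Rge p" shows "pi0 p (dK y r) = dA y p (pi1 p r)"
proof -
  have rr: "r \<in> Rhat" using r Rge_Rhat by blast
  have p1: "pi1 p r \<in> Rhat" using pi1_Rdeg[OF rr] Rdeg_Rhat by blast
  have "dK y r = dK y (pi1 p r) + dK y (r - pi1 p r)"
    using dK_add[OF p1 Rhat_diff[OF rr p1]] by simp
  moreover have "pi0 p (dK y (r - pi1 p r)) = 0" using dK_IF[OF Rge_rest[OF r]] pi0_IF_Suc by blast
  ultimately show ?thesis by (simp add: pi0_add dA_def)
qed


lemma JA_diff: assumes "a \<in> JA y p" "b \<in> JA y p" shows "a - b \<in> JA y p"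
proof -
  obtain r s where r: "r \<in> Rdeg p" "a = dA y p r" and s: "s \<in> Rdeg p" "b = dA y p s"
    using assms unfolding JA_def by blast
  then have "a - b = dA y p (r - s)" by (simp add: dA_diff Rdeg_Rhat)
  then show ?thesis unfolding JA_def using Rdeg_diff[OF r(1) s(1)] by blast
qed

lemma JA_zero[simp]: "0 \<in> JA y p"
proof -
  have "dA y p 0 = 0" by (simp add: dA_def pi0_def fun_eq_iff)
  then show ?thesis unfolding JA_def using Rdeg_zero by (metis image_eqI)
qed

lemma JA_Xt: assumes "a \<in> JA y p" shows "a \<in> Xt p"
proof -
  obtain r where r: "r \<in> Rdeg p" "a = dA y p r" using assms unfolding JA_def by blast
  then show ?thesis unfolding dA_def using pi0_Xt dK_Fhat Rdeg_Rhat by blast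
qed

lemma Mid_diff: assumes "a \<in> Mid y" "b \<in> Mid y" shows "a - b \<in> Mid y"
proof -
  obtain r s where r: "r \<in> Rhat" "a = dK y r" and s: "s \<in> Rhat" "b = dK y s"
    using assms unfolding Mid_def by blast
  then have "a - b = dK y (r - s)" by (simp add: dK_diff)
  then show ?thesis unfolding Mid_def using Rhat_diff[OF r(1) s(1)] by blast
qed

lemma Mid_add: assumes "a \<in> Mid y" "b \<in> Mid y" shows "a + b \<in> Mid y"
proof -
  obtain r s where r: "r \<in> Rhat" "a = dK y r" and s: "s \<in> Rhat" "b = dK y s"
    using assms unfolding Mid_def by blast
  then have "a + b = dK y (r + s)" by (simp add: dK_add)
  then show ?thesis unfolding Mid_def using Rhat_add[OF r(1) s(1)] by blast
qed

lemma Mid_zero[simp]: "0 \<in> Mid y"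
  unfolding Mid_def using Rhat_zero dK_zero by (metis image_eqI)

lemma Mid_Fhat: "a \<in> Mid y \<Longrightarrow> a \<in> Fhat"
  unfolding Mid_def using dK_Fhat by blast

lemma dK_lift_Suc:
  assumes surj: "syz_surj y k" and r: "r \<in> Rge k" and van: "pi0 k (dK y r) = 0"
  shows "\<exists>r'\<in>Rge (Suc k). dK y r' = dK y r"
proof -
  have "pi1 k r \<in> kerA y k"
    using dK_pi[OF r] van pi1_Rdeg[OF Rge_Rhat[OF r]] by (simp add: kerA_def)
  then obtain s where s: "s \<in> kerK y k" "pi1 k s = pi1 k r"
    using surj unfolding syz_surj_def by blast
  then have sR: "s \<in> Rge k" and s0: "dK y s = 0" by (auto simp: kerK_def)
  have "r - s \<in> Rge (Suc k)" using Rge_Suc_of_pi1_eq[OF r sR s(2)[symmetric]] .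
  moreover have "dK y (r - s) = dK y r" using dK_diff[OF Rge_Rhat[OF r] Rge_Rhat[OF sR]] s0 by simp
  ultimately show ?thesis by blast
qed

lemma Mid_lift_Rge:
  assumes surj: "\<forall>k. 2 \<le> k \<and> k < m \<longrightarrow> syz_surj y k" and r: "r \<in> Rhat"
    and van: "\<forall>w. length w < m \<longrightarrow> dK y r w = 0"
  shows "\<exists>r'\<in>Rge m. dK y r' = dK y r"
proof -
  have "k \<le> m \<Longrightarrow> \<exists>r'\<in>Rge k. dK y r' = dK y r" for k
  proof (induction k)
    case 0
    show ?case using Rge_le2[OF r] by auto
  next
    case (Suc k)
    then obtain r' where r': "r' \<in> Rge k" "dK y r' = dK y r" by auto
    show ?case
    proof (cases "Suc k \<le> 2")
      case True
      then show ?thesis using Rge_le2[OF r] by auto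
    next
      case False
      have "pi0 k (dK y r') = 0" using van Suc.prems r'(2) by (auto simp: pi0_def fun_eq_iff)
      then show ?thesis using dK_lift_Suc[OF _ r'(1)] surj False Suc.prems r'(2) by auto
    qed
  qed
  then show ?thesis by blast
qed

lemma Xt_in_JA_of_congruent:
  assumes surj: "\<forall>k. 2 \<le> k \<and> k < m \<longrightarrow> syz_surj y k"
    and v: "v \<in> Xt m" and h: "h \<in> IF (Suc m)" and M: "v - h \<in> Mid y"
  shows "v \<in> JA y m"
proof -
  obtain r where r: "r \<in> Rhat" "v - h = dK y r" using M unfolding Mid_def by blast
  have "\<forall>w. length w < m \<longrightarrow> dK y r w = 0"
    using v h r(2)[symmetric] by (auto simp: Xt_def IF_def)
  then obtain r' where r': "r' \<in> Rge m" "dK y r' = dK y r" using Mid_lift_Rge[OF surj r(1)] by blast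
  have "v = pi0 m (v - h)" using v h by (auto simp: Xt_def IF_def pi0_def fun_eq_iff)
  also have "\<dots> = dA y m (pi1 m r')" using dK_pi[OF r'(1)] r'(2) r(2) by simp
  finally show ?thesis unfolding JA_def using pi1_Rdeg[OF Rge_Rhat[OF r'(1)]] by blast
qed

lemma qK_eq: assumes "f \<in> Fhat" "g \<in> Fhat" "f - g \<in> Mid y" shows "qK y f = qK y g"
proof -
  have "x - f \<in> Mid y \<longleftrightarrow> x - g \<in> Mid y" for x
  proof
    assume "x - f \<in> Mid y" then have "(x - f) + (f - g) \<in> Mid y" using Mid_add assms(3) by blast
    then show "x - g \<in> Mid y" by simp
  next
    assume "x - g \<in> Mid y" then have "(x - g) - (f - g) \<in> Mid y" using Mid_diff assms(3) by blast
    then show "x - f \<in> Mid y" by simp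
  qed
  then show ?thesis by (auto simp: qK_def)
qed

lemma qK_self: "f \<in> Fhat \<Longrightarrow> f \<in> qK y f" by (simp add: qK_def Mid_zero)

lemma qK_Fhat: assumes "x \<in> qK y g" shows "g \<in> Fhat"
proof -
  have "x \<in> Fhat" "x - g \<in> Mid y" using assms by (auto simp: qK_def)
  then have "x - (x - g) \<in> Fhat" using Mid_Fhat Fhat_diff by blast
  then show ?thesis by simp
qed

lemma qK_eqD: assumes "f \<in> Fhat" "qK y f = qK y g" shows "f - g \<in> Mid y"
  using qK_self[OF assms(1)] assms(2) unfolding qK_def fsub_eq by blast

lemma grclass_char: assumes f: "f \<in> Fhat"
  shows "grclass y m (qK y f) = {qK y g | g. g \<in> IF m \<and> (\<exists>h\<in>IF (Suc m). g - f - h \<in> Mid y)}"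
proof (intro set_eqI iffI)
  fix k assume "k \<in> grclass y m (qK y f)"
  then obtain g0 g f' where g0: "g0 \<in> IF m" "k = qK y g0" and kg: "k = qK y g" and ff: "qK y f = qK y f'"
    and hh: "qK y (g - f') \<in> IK y (Suc m)"
    unfolding grclass_def IK_def by auto
  obtain h where h: "h \<in> IF (Suc m)" "qK y (g - f') = qK y h" using hh unfolding IK_def by auto
  have g0F: "g0 \<in> Fhat" using g0 IF_Fhat by blast
  have gF: "g \<in> Fhat" using qK_self[OF g0F] g0(2) kg qK_Fhat by metis
  have f'F: "f' \<in> Fhat" using qK_self[OF f] ff qK_Fhat by metis
  have Mg: "g0 - g \<in> Mid y" using qK_eqD[OF g0F] g0(2) kg by metis
  have Mf: "f - f' \<in> Mid y" using qK_eqD[OF f ff] .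
  have Mh: "(g - f') - h \<in> Mid y" using qK_eqD[OF Fhat_diff[OF gF f'F] h(2)] .
  have "(g0 - g) + ((g - f') - h) - (f - f') \<in> Mid y"
    using Mid_add[OF Mg Mh] Mid_diff[OF _ Mf] by blast
  then have "g0 - f - h \<in> Mid y" by (simp add: algebra_simps)
  then show "k \<in> {qK y g | g. g \<in> IF m \<and> (\<exists>h\<in>IF (Suc m). g - f - h \<in> Mid y)}"
    using g0 h(1) by blast
next
  fix k assume "k \<in> {qK y g | g. g \<in> IF m \<and> (\<exists>h\<in>IF (Suc m). g - f - h \<in> Mid y)}"
  then obtain g h where g: "g \<in> IF m" "k = qK y g" and h: "h \<in> IF (Suc m)" "g - f - h \<in> Mid y" by blast
  have gF: "g \<in> Fhat" using g IF_Fhat by blast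
  have "qK y (g - f) = qK y h"
    using qK_eq[OF Fhat_diff[OF gF f] IF_Fhat[OF h(1)] h(2)] .
  then have "qK y (g - f) \<in> IK y (Suc m)" using h(1) unfolding IK_def by blast
  moreover have "k \<in> IK y m" using g unfolding IK_def by blast
  ultimately show "k \<in> grclass y m (qK y f)" unfolding grclass_def using g(2) by auto
qed

lemma grclass_cong: assumes f1: "f1 \<in> Fhat" and f2: "f2 \<in> Fhat" and h0: "h0 \<in> IF (Suc m)"
  and M: "f1 - f2 - h0 \<in> Mid y"
  shows "grclass y m (qK y f1) = grclass y m (qK y f2)"
proof -
  have "(\<exists>h\<in>IF (Suc m). g - f1 - h \<in> Mid y) \<longleftrightarrow> (\<exists>h\<in>IF (Suc m). g - f2 - h \<in> Mid y)" for g
  proof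
    assume "\<exists>h\<in>IF (Suc m). g - f1 - h \<in> Mid y"
    then obtain h where h: "h \<in> IF (Suc m)" "g - f1 - h \<in> Mid y" by blast
    have "(g - f1 - h) + (f1 - f2 - h0) \<in> Mid y" using Mid_add[OF h(2) M] .
    then have "g - f2 - (h + h0) \<in> Mid y" by (simp add: algebra_simps)
    then show "\<exists>h\<in>IF (Suc m). g - f2 - h \<in> Mid y" using IF_add[OF h(1) h0] by blast
  next
    assume "\<exists>h\<in>IF (Suc m). g - f2 - h \<in> Mid y"
    then obtain h where h: "h \<in> IF (Suc m)" "g - f2 - h \<in> Mid y" by blast
    have "(g - f2 - h) - (f1 - f2 - h0) \<in> Mid y" using Mid_diff[OF h(2) M] .
    then have "g - f1 - (h - h0) \<in> Mid y" by (simp add: algebra_simps)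
    then show "\<exists>h\<in>IF (Suc m). g - f1 - h \<in> Mid y" using IF_diff[OF h(1) h0] by blast
  qed
  then show ?thesis unfolding grclass_char[OF f1] grclass_char[OF f2] by simp
qed

definition Aclass :: "nat \<Rightarrow> 'x ser \<Rightarrow> 'x ser set" where
  "Aclass m v = {v' \<in> Xt m. v' - v \<in> JA y m}"

lemma Aquot_eq: "Aquot y m = Aclass m ` Xt m"
  by (simp add: Aquot_def Aclass_def)

lemma Aclass_self: "v \<in> Xt m \<Longrightarrow> v \<in> Aclass m v" by (simp add: Aclass_def JA_zero)

lemma Aclass_eq: assumes "v1 \<in> Xt m" "v2 \<in> Xt m" "v1 - v2 \<in> JA y m" shows "Aclass m v1 = Aclass m v2"
proof -
  have "x - v1 \<in> JA y m \<longleftrightarrow> x - v2 \<in> JA y m" for x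
  proof
    assume "x - v1 \<in> JA y m"
    then have "(x - v1) - (0 - (v1 - v2)) \<in> JA y m" using JA_diff JA_zero assms(3) by metis
    then show "x - v2 \<in> JA y m" by simp
  next
    assume "x - v2 \<in> JA y m" then have "(x - v2) - (v1 - v2) \<in> JA y m" using JA_diff assms(3) by blast
    then show "x - v1 \<in> JA y m" by simp
  qed
  then show ?thesis by (auto simp: Aclass_def)
qed

lemma natmap_rep: assumes a: "a \<in> Aquot y m"
  obtains v where "v \<in> Xt m" "a = Aclass m v" "natmap y m a = grclass y m (qK y v)"
proof -
  obtain v0 where v0: "v0 \<in> Xt m" "a = Aclass m v0" using a unfolding Aquot_eq by blast
  let ?v = "SOME v. v \<in> a"
  have "?v \<in> a" using Aclass_self[OF v0(1)] v0(2) by (metis someI)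
  then have v: "?v \<in> Xt m" "?v - v0 \<in> JA y m" using v0(2) by (auto simp: Aclass_def)
  then have "a = Aclass m ?v" using Aclass_eq v0 by metis
  moreover have "natmap y m a = grclass y m (qK y ?v)" by (simp add: natmap_def)
  ultimately show ?thesis using that v(1) by blast
qed

lemma grclass_self: "f \<in> IF m \<Longrightarrow> qK y f \<in> grclass y m (qK y f)"
  using IF_Fhat[of f m] by (subst grclass_char) (auto intro!: exI[of _ f] bexI[of _ 0])

lemma natmap_inj_on:
  assumes surj: "\<forall>k. 2 \<le> k \<and> k < m \<longrightarrow> syz_surj y k"
  shows "inj_on (natmap y m) (Aquot y m)"
proof (rule inj_onI)
  fix a1 a2 assume a1: "a1 \<in> Aquot y m" and a2: "a2 \<in> Aquot y m" and eq: "natmap y m a1 = natmap y m a2"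
  obtain v1 where v1: "v1 \<in> Xt m" "a1 = Aclass m v1" "natmap y m a1 = grclass y m (qK y v1)"
    using natmap_rep[OF a1] by blast
  obtain v2 where v2: "v2 \<in> Xt m" "a2 = Aclass m v2" "natmap y m a2 = grclass y m (qK y v2)"
    using natmap_rep[OF a2] by blast
  have "qK y v1 \<in> grclass y m (qK y v2)"
    using grclass_self[OF Xt_IF[OF v1(1)]] eq v1(3) v2(3) by simp
  then obtain g h where g: "g \<in> IF m" "qK y v1 = qK y g" and h: "h \<in> IF (Suc m)" "g - v2 - h \<in> Mid y"
    unfolding grclass_char[OF Xt_Fhat[OF v2(1)]] by blast
  have "v1 - g \<in> Mid y" using qK_eqD[OF Xt_Fhat[OF v1(1)] g(2)] .
  from Mid_add[OF this h(2)] have "(v1 - v2) - h \<in> Mid y" by (simp add: algebra_simps)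
  then have "v1 - v2 \<in> JA y m" using Xt_in_JA_of_congruent[OF surj Xt_diff[OF v1(1) v2(1)] h(1)] by blast
  then show "a1 = a2" using v1 v2 Aclass_eq by metis
qed

lemma natmap_image: "natmap y m ` Aquot y m = grK y m"
proof (intro set_eqI iffI)
  fix k assume "k \<in> natmap y m ` Aquot y m"
  then obtain a where a: "a \<in> Aquot y m" "k = natmap y m a" by blast
  obtain v where v: "v \<in> Xt m" "natmap y m a = grclass y m (qK y v)" using natmap_rep[OF a(1)] by blast
  have "qK y v \<in> IK y m" using Xt_IF[OF v(1)] unfolding IK_def by blast
  then show "k \<in> grK y m" unfolding grK_def using a(2) v(2) by blast
next
  fix k assume "k \<in> grK y m"
  then obtain f where f: "f \<in> IF m" "k = grclass y m (qK y f)" unfolding grK_def IK_def by blast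
  have fF: "f \<in> Fhat" using f IF_Fhat by blast
  let ?a = "Aclass m (pi0 m f)"
  have aA: "?a \<in> Aquot y m" unfolding Aquot_eq using pi0_Xt[OF fF] by blast
  obtain v where v: "v \<in> Xt m" "?a = Aclass m v" "natmap y m ?a = grclass y m (qK y v)"
    using natmap_rep[OF aA] by blast
  have "v \<in> ?a" using Aclass_self[OF v(1)] v(2) by simp
  then have "v - pi0 m f \<in> JA y m" by (simp add: Aclass_def)
  then obtain r where r: "r \<in> Rdeg m" "v - pi0 m f = dA y m r" unfolding JA_def by blast
  have dKI: "dK y r \<in> IF m" using dK_IF[OF Rdeg_Rge[OF r(1)]] .
  let ?h = "(v - f) - dK y r"
  have "?h = - (dK y r - pi0 m (dK y r)) - (f - pi0 m f)"
    using r(2) by (simp add: dA_def algebra_simps)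
  then have hI: "?h \<in> IF (Suc m)"
    using IF_pi0_rest[OF dKI] IF_pi0_rest[OF f(1)] IF_uminus IF_diff by metis
  have "v - f - ?h \<in> Mid y" unfolding Mid_def using Rdeg_Rhat[OF r(1)] by simp
  then have "grclass y m (qK y v) = grclass y m (qK y f)"
    using grclass_cong[OF Xt_Fhat[OF v(1)] fF hI] by blast
  then show "k \<in> natmap y m ` Aquot y m" using aA v(3) f(2) by (metis image_eqI)
qed

lemma quadratic_of_syz_surj: assumes "\<forall>p\<ge>2. syz_surj y p" shows "quadratic y"
  unfolding quadratic_def bij_betw_def using assms natmap_inj_on natmap_image by simp


section \<open>Liftable syzygies\<close>

definition lifted_syz :: "nat \<Rightarrow> ('x,'q) rser set" where
  "lifted_syz p = pi1 p ` kerK y p"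


lemma lifted_syz_zero[simp]: "0 \<in> lifted_syz p"
proof -
  have "pi1 p 0 = 0" by (simp add: pi1_def fun_eq_iff)
  then show ?thesis unfolding lifted_syz_def using kerK_zero by (metis image_eqI)
qed

lemma lifted_syz_add: assumes "s1 \<in> lifted_syz p" "s2 \<in> lifted_syz p" shows "s1 + s2 \<in> lifted_syz p"
proof -
  obtain r1 r2 where r: "r1 \<in> kerK y p" "s1 = pi1 p r1" "r2 \<in> kerK y p" "s2 = pi1 p r2"
    using assms unfolding lifted_syz_def by blast
  have g: "r1 \<in> Rge p" "r2 \<in> Rge p" "dK y r1 = 0" "dK y r2 = 0" using r(1,3) by (auto simp: kerK_def)
  have "dK y (r1 + r2) = 0" using dK_add[OF Rge_Rhat[OF g(1)] Rge_Rhat[OF g(2)]] g(3,4) by simp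
  then have "r1 + r2 \<in> kerK y p" using Rge_add[OF g(1,2)] by (simp add: kerK_def)
  moreover have "s1 + s2 = pi1 p (r1 + r2)" using r by (simp add: pi1_add)
  ultimately show ?thesis unfolding lifted_syz_def by blast
qed

lemma lifted_syz_smult: assumes "s \<in> lifted_syz p" shows "(\<lambda>b. c * s b) \<in> lifted_syz p"
proof -
  obtain r where r: "r \<in> kerK y p" "s = pi1 p r" using assms unfolding lifted_syz_def by blast
  have g: "r \<in> Rge p" "dK y r = 0" using r(1) by (auto simp: kerK_def)
  have "dK y (\<lambda>b. c * r b) = 0" using dK_smult[OF Rge_Rhat[OF g(1)]] g(2) by (simp add: fun_eq_iff)
  then have "(\<lambda>b. c * r b) \<in> kerK y p" using Rge_smult[OF g(1)] by (simp add: kerK_def)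
  moreover have "(\<lambda>b. c * s b) = pi1 p (\<lambda>b. c * r b)" using r by (simp add: pi1_smult)
  ultimately show ?thesis unfolding lifted_syz_def by blast
qed

lemma lifted_syz_uminus: assumes "s \<in> lifted_syz p" shows "- s \<in> lifted_syz p"
proof -
  have "- s = (\<lambda>b. (-1) * s b)" by auto
  then show ?thesis using lifted_syz_smult[OF assms, of "-1"] by simp
qed

lemma lifted_syz_sum: "(\<And>i. i \<in> I \<Longrightarrow> F i \<in> lifted_syz p) \<Longrightarrow> sum F I \<in> lifted_syz p"
proof (induction I rule: infinite_finite_induct)
  case (insert i I)
  have "sum F (insert i I) = F i + sum F I" using insert(1,2) by (rule sum.insert)
  then show ?case using insert lifted_syz_add by (metis insertCI)
qed simp_all

lemma lifted_syz_kerA: assumes "s \<in> lifted_syz p" shows "s \<in> kerA y p"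
proof -
  obtain r where r: "r \<in> kerK y p" "s = pi1 p r" using assms unfolding lifted_syz_def by blast
  have rg: "r \<in> Rge p" and r0: "dK y r = 0" using r by (auto simp: kerK_def)
  have "dA y p s = pi0 p (dK y r)" using dK_pi[OF rg] r(2) by simp
  also have "\<dots> = 0" using r0 by (simp add: pi0_def fun_eq_iff)
  finally show ?thesis using pi1_Rdeg[OF Rge_Rhat[OF rg]] r(2) by (simp add: kerA_def)
qed

lemma dA_lmul: assumes a: "a \<in> Xt j" and r: "r \<in> Rdeg k" shows "dA y (j+k) (lmul a r) = fmul a (dA y k r)"
proof -
  have "dA y (j+k) (lmul a r) = pi0 (j+k) (fmul a (dK y r))"
    by (simp add: dA_def dK_lmul[OF Xt_Fhat[OF a] Rdeg_Rhat[OF r]])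
  also have "\<dots> = fmul (pi0 j a) (pi0 k (dK y r))"
    by (rule pi0_fmul[OF Xt_IF[OF a] dK_IF[OF Rdeg_Rge[OF r]]])
  finally show ?thesis using Xt_pi0[OF a] by (simp add: dA_def)
qed

lemma dA_rmul: assumes g: "g \<in> Xt j" and r: "r \<in> Rdeg k" shows "dA y (k+j) (rmul r g) = fmul (dA y k r) g"
proof -
  have "dA y (k+j) (rmul r g) = pi0 (k+j) (fmul (dK y r) g)"
    by (simp add: dA_def dK_rmul[OF Xt_Fhat[OF g] Rdeg_Rhat[OF r]])
  also have "\<dots> = fmul (pi0 k (dK y r)) (pi0 j g)"
    by (rule pi0_fmul[OF dK_IF[OF Rdeg_Rge[OF r]] Xt_IF[OF g]])
  finally show ?thesis using Xt_pi0[OF g] by (simp add: dA_def)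
qed

lemma lifted_syz_lmul: assumes a: "a \<in> Xt j" and s: "s \<in> lifted_syz k" shows "lmul a s \<in> lifted_syz (j+k)"
proof -
  obtain r where r: "r \<in> kerK y k" "s = pi1 k r" using s unfolding lifted_syz_def by blast
  have rg: "r \<in> Rge k" and r0: "dK y r = 0" using r by (auto simp: kerK_def)
  have "lmul a r \<in> kerK y (j+k)"
    using lmul_Rge[OF Xt_IF[OF a] rg] dK_lmul[OF Xt_Fhat[OF a] Rge_Rhat[OF rg]] r0 by (simp add: kerK_def)
  moreover have "pi1 (j+k) (lmul a r) = lmul a s"
    using pi1_lmul[OF Xt_IF[OF a] rg] Xt_pi0[OF a] r(2) by simp
  ultimately show ?thesis unfolding lifted_syz_def by (metis image_eqI)
qed

lemma lifted_syz_rmul: assumes g: "g \<in> Xt j" and s: "s \<in> lifted_syz k" shows "rmul s g \<in> lifted_syz (k+j)"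
proof -
  obtain r where r: "r \<in> kerK y k" "s = pi1 k r" using s unfolding lifted_syz_def by blast
  have rg: "r \<in> Rge k" and r0: "dK y r = 0" using r by (auto simp: kerK_def)
  have "rmul r g \<in> kerK y (k+j)"
    using rmul_Rge[OF Xt_IF[OF g] rg] dK_rmul[OF Xt_Fhat[OF g] Rge_Rhat[OF rg]] r0 by (simp add: kerK_def)
  moreover have "pi1 (k+j) (rmul r g) = rmul s g"
    using pi1_rmul[OF Xt_IF[OF g] rg] Xt_pi0[OF g] r(2) by simp
  ultimately show ?thesis unfolding lifted_syz_def by (metis image_eqI)
qed

lemma lifted_syz_trivial: assumes r': "r' \<in> Rdeg k" and rho: "\<rho> \<in> Rdeg 2"
  shows "rmul r' (dA y 2 \<rho>) - lmul (dA y k r') \<rho> \<in> lifted_syz (k+2)"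
proof -
  have r'g: "r' \<in> Rge k" and rhog: "\<rho> \<in> Rge 2" using r' rho Rdeg_Rge by blast+
  have r'h: "r' \<in> Rhat" and rhoh: "\<rho> \<in> Rhat" using r' rho Rdeg_Rhat by blast+
  have I1: "dK y \<rho> \<in> IF 2" and I2: "dK y r' \<in> IF k" using dK_IF r'g rhog by blast+
  let ?R = "rmul r' (dK y \<rho>) - lmul (dK y r') \<rho>"
  have g1: "rmul r' (dK y \<rho>) \<in> Rge (k+2)" using rmul_Rge[OF I1 r'g] .
  have g2: "lmul (dK y r') \<rho> \<in> Rge (k+2)" using lmul_Rge[OF I2 rhog] .
  have "?R \<in> Rge (k+2)" using Rge_diff[OF g1 g2] .
  moreover have "dK y ?R = 0"
    using dK_diff[OF Rge_Rhat[OF g1] Rge_Rhat[OF g2]] dK_rmul[OF IF_Fhat[OF I1] r'h] dK_lmul[OF IF_Fhat[OF I2] rhoh]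
    by simp
  ultimately have "?R \<in> kerK y (k+2)" by (simp add: kerK_def)
  moreover have "pi1 (k+2) ?R = rmul r' (dA y 2 \<rho>) - lmul (dA y k r') \<rho>"
    using pi1_rmul[OF I1 r'g] pi1_lmul[OF I2 rhog] Rdeg_pi1[OF r'] Rdeg_pi1[OF rho]
    by (simp add: pi1_diff dA_def)
  ultimately show ?thesis unfolding lifted_syz_def by (metis image_eqI)
qed

section \<open>The Koszul case\<close>

lemma dA_sum_lmul_delta:
  assumes "\<And>x. r x \<in> Rdeg k"
  shows "dA y (Suc k) (\<Sum>x\<in>UNIV. lmul (delta [x]) (r x)) = (\<Sum>x\<in>UNIV. fmul (delta [x]) (dA y k (r x)))"
proof -
  have "dA y (Suc k) (\<Sum>x\<in>UNIV. lmul (delta [x]) (r x)) = (\<Sum>x\<in>UNIV. dA y (Suc k) (lmul (delta [x]) (r x)))"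
    by (rule dA_sum) (use lmul_Rdeg[OF delta_Xt assms] Rdeg_Rhat in auto)
  also have "\<dots> = (\<Sum>x\<in>UNIV. fmul (delta [x]) (dA y k (r x)))"
  proof (rule sum.cong[OF refl])
    fix x show "dA y (Suc k) (lmul (delta [x]) (r x)) = fmul (delta [x]) (dA y k (r x))"
      using dA_lmul[OF delta_Xt[of "[x]"] assms[of x]] by simp
  qed
  finally show ?thesis .
qed

lemma dA_sum_rmul_delta:
  assumes "\<And>x. r x \<in> Rdeg k"
  shows "dA y (Suc k) (\<Sum>x\<in>UNIV. rmul (r x) (delta [x])) = (\<Sum>x\<in>UNIV. fmul (dA y k (r x)) (delta [x]))"
proof -
  have "dA y (Suc k) (\<Sum>x\<in>UNIV. rmul (r x) (delta [x])) = (\<Sum>x\<in>UNIV. dA y (Suc k) (rmul (r x) (delta [x])))"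
    by (rule dA_sum) (use rmul_Rdeg[OF delta_Xt assms] Rdeg_Rhat in auto)
  also have "\<dots> = (\<Sum>x\<in>UNIV. fmul (dA y k (r x)) (delta [x]))"
  proof (rule sum.cong[OF refl])
    fix x show "dA y (Suc k) (rmul (r x) (delta [x])) = fmul (dA y k (r x)) (delta [x])"
      using dA_rmul[OF delta_Xt[of "[x]"] assms[of x]] by simp
  qed
  finally show ?thesis .
qed

lemma lifted_syz_of_right_len0:
  assumes fin: "finite (UNIV :: 'x set)" and s2: "kerA y 2 \<subseteq> lifted_syz 2"
  shows "\<sigma> \<in> Rdeg p \<Longrightarrow> right_len 0 \<sigma> \<Longrightarrow> dA y p \<sigma> = 0 \<Longrightarrow> \<sigma> \<in> lifted_syz p"
proof (induction p arbitrary: \<sigma>)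
  case 0
  then show ?case using Rdeg_lt2_eq_0 lifted_syz_zero by (metis zero_less_numeral)
next
  case (Suc k)
  consider "Suc k < 2" | "Suc k = 2" | "2 \<le> k" by linarith
  then show ?case
  proof cases
    case 1
    then show ?thesis using Rdeg_lt2_eq_0[OF Suc.prems(1)] lifted_syz_zero by metis
  next
    case 2
    then have "\<sigma> \<in> kerA y 2" using Suc.prems(1,3) by (simp add: kerA_def numeral_2_eq_2 zero_fun_def)
    then show ?thesis using s2 2 by (auto simp: numeral_2_eq_2)
  next
    case 3
    have "left_empty_part \<sigma> = 0" using left_empty_part_eq_0[OF Suc.prems(1,2)] 3 by simp
    then have dec: "\<sigma> = (\<Sum>x\<in>UNIV. lmul (delta [x]) (strip_left \<sigma> x))"
      using left_letter_decomp[OF fin, of \<sigma>] by simp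
    have pdeg: "strip_left \<sigma> x \<in> Rdeg k" for x using strip_left_Rdeg[OF Suc.prems(1)] .
    have "dA y (Suc k) \<sigma> = (\<Sum>x\<in>UNIV. fmul (delta [x]) (dA y k (strip_left \<sigma> x)))"
      using arg_cong[OF dec, of "dA y (Suc k)"] dA_sum_lmul_delta[OF pdeg] by (rule trans)
    then have "dA y k (strip_left \<sigma> x) w = dA y (Suc k) \<sigma> (x # w)" for x w
      using sum_delta_eval_cons[OF fin] by simp
    then have "dA y k (strip_left \<sigma> x) = 0" for x using Suc.prems(3) by (simp add: fun_eq_iff)
    moreover have "right_len 0 (strip_left \<sigma> x)" for x
      using Suc.prems(2) by (auto simp: right_len_def strip_left_def)
    ultimately have "strip_left \<sigma> x \<in> lifted_syz k" for x using Suc.IH pdeg by blast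
    then have "lmul (delta [x]) (strip_left \<sigma> x) \<in> lifted_syz (Suc k)" for x
      using lifted_syz_lmul[OF delta_Xt[of "[x]"]] by simp
    then show ?thesis by (subst dec) (rule lifted_syz_sum)
  qed
qed

lemma lifted_syz_of_right_nonempty:
  assumes fin: "finite (UNIV :: 'x set)" and sk: "kerA y k \<subseteq> lifted_syz k"
    and \<tau>: "\<tau> \<in> kerA y (Suc k)" "right_nonempty \<tau>"
  shows "\<tau> \<in> lifted_syz (Suc k)"
proof -
  have \<tau>R: "\<tau> \<in> Rdeg (Suc k)" using \<tau>(1) by (simp add: kerA_def)
  have "right_empty_part \<tau> = 0"
    using \<tau>(2) by (auto simp: fun_eq_iff right_empty_part_def right_nonempty_def)
  then have dec: "\<tau> = (\<Sum>x\<in>UNIV. rmul (strip_right \<tau> x) (delta [x]))"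
    using right_letter_decomp[OF fin, of \<tau>] by simp
  have pdeg: "strip_right \<tau> x \<in> Rdeg k" for x using strip_right_Rdeg[OF \<tau>R] .
  have "dA y (Suc k) \<tau> = (\<Sum>x\<in>UNIV. fmul (dA y k (strip_right \<tau> x)) (delta [x]))"
    using arg_cong[OF dec, of "dA y (Suc k)"] dA_sum_rmul_delta[OF pdeg] by (rule trans)
  then have "dA y k (strip_right \<tau> x) w = dA y (Suc k) \<tau> (w @ [x])" for x w
    using sum_delta_eval_snoc[OF fin] by simp
  then have "dA y k (strip_right \<tau> x) = 0" for x using \<tau>(1) by (simp add: kerA_def fun_eq_iff)
  then have "strip_right \<tau> x \<in> lifted_syz k" for x using sk pdeg by (auto simp: kerA_def)
  then have "rmul (strip_right \<tau> x) (delta [x]) \<in> lifted_syz (Suc k)" for x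
    using lifted_syz_rmul[OF delta_Xt[of "[x]"]] by simp
  then show ?thesis by (subst dec) (rule lifted_syz_sum)
qed

definition dA_right_len :: "nat \<Rightarrow> nat \<Rightarrow> 'x ser \<Rightarrow> bool" where
  "dA_right_len n j z = (\<exists>\<rho>\<in>Rdeg n. dA y n \<rho> = z \<and> right_len j \<rho>)"

lemma dA_right_len_zero: "dA_right_len n j 0"
  unfolding dA_right_len_def by (rule bexI[of _ 0]) (auto simp: dA_zero)

lemma dA_right_len_add: assumes "dA_right_len n j f" "dA_right_len n j g" shows "dA_right_len n j (f + g)"
proof -
  obtain r1 r2 where r: "r1 \<in> Rdeg n" "dA y n r1 = f" "right_len j r1" "r2 \<in> Rdeg n" "dA y n r2 = g" "right_len j r2"
    using assms unfolding dA_right_len_def by blast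
  have "dA y n (r1 + r2) = f + g" using dA_add[OF Rdeg_Rhat[OF r(1)] Rdeg_Rhat[OF r(4)]] r by simp
  then show ?thesis unfolding dA_right_len_def using Rdeg_add[OF r(1,4)] right_len_add[OF r(3,6)] by blast
qed

lemma dA_right_len_smult: assumes "dA_right_len n j f" shows "dA_right_len n j (\<lambda>w. c * f w)"
proof -
  obtain r where r: "r \<in> Rdeg n" "dA y n r = f" "right_len j r" using assms unfolding dA_right_len_def by blast
  have "dA y n (\<lambda>b. c * r b) = (\<lambda>w. c * f w)" using dA_smult[OF Rdeg_Rhat[OF r(1)]] r by simp
  then show ?thesis unfolding dA_right_len_def using Rdeg_smult[OF r(1)] right_len_smult[OF r(3)] by blast
qed

lemma dA_right_len_tens: assumes z: "z \<in> tens (tens (Xt i) (JA y 2)) (Xt j)"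
  shows "dA_right_len (i+2+j) j z"
  using z
proof (induction rule: tens_induct)
  case zero then show ?case by (rule dA_right_len_zero)
next
  case (add f g) then show ?case by (rule dA_right_len_add)
next
  case (smult c f) then show ?case by (rule dA_right_len_smult)
next
  case (base t c)
  from base(1) show ?case
  proof (induction rule: tens_induct)
    case zero then show ?case using dA_right_len_zero by (metis fmul_zero_left)
  next
    case (add f g) then show ?case using dA_right_len_add fmul_add_left by metis
  next
    case (smult c' f) then show ?case using dA_right_len_smult by (simp add: fmul_smult_left)
  next
    case (base a w)
    obtain r0 where r0: "r0 \<in> Rdeg 2" "w = dA y 2 r0" using base(2) unfolding JA_def by blast
    let ?\<rho> = "rmul (lmul a r0) c"
    have l: "lmul a r0 \<in> Rdeg (i+2)" using lmul_Rdeg[OF base(1) r0(1)] .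
    have "?\<rho> \<in> Rdeg (i+2+j)" using rmul_Rdeg[OF \<open>c \<in> Xt j\<close> l] .
    moreover have "dA y (i+2+j) ?\<rho> = fmul (fmul a w) c"
      using dA_rmul[OF \<open>c \<in> Xt j\<close> l] dA_lmul[OF base(1) r0(1)] r0(2) by simp
    moreover have "right_len j ?\<rho>"
      using right_len_rmul[OF right_len_lmul[OF Rdeg2_right_len0[OF r0(1)]] \<open>c \<in> Xt j\<close>] .
    ultimately show ?case unfolding dA_right_len_def by blast
  qed
qed

text \<open>
z = dA \<sigma> for some \<sigma> with only empty right words which differs by a lifted syzygy from some \<rho>
with only nonempty right words; in the induction step \<rho> is handled one degree lower.
\<close>

definition right_reducible :: "nat \<Rightarrow> 'x ser \<Rightarrow> bool" where
  "right_reducible p z = (\<exists>\<sigma>\<in>Rdeg p. right_len 0 \<sigma> \<and> dA y p \<sigma> = z \<and> (\<exists>lw\<in>lifted_syz p. \<exists>\<rho>\<in>Rdeg p. right_nonempty \<rho> \<and> \<sigma> = lw + \<rho>))"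

lemma right_reducible_zero: "right_reducible p 0"
  unfolding right_reducible_def
  by (rule bexI[of _ 0]) (auto simp: right_len_def right_nonempty_def dA_zero lifted_syz_zero intro!: bexI[of _ 0])

lemma right_reducible_add: assumes "right_reducible p f" "right_reducible p g" shows "right_reducible p (f + g)"
proof -
  obtain s1 l1 r1 where 1: "s1 \<in> Rdeg p" "right_len 0 s1" "dA y p s1 = f" "l1 \<in> lifted_syz p" "r1 \<in> Rdeg p" "right_nonempty r1" "s1 = l1 + r1"
    using assms(1) unfolding right_reducible_def by blast
  obtain s2 l2 r2 where 2: "s2 \<in> Rdeg p" "right_len 0 s2" "dA y p s2 = g" "l2 \<in> lifted_syz p" "r2 \<in> Rdeg p" "right_nonempty r2" "s2 = l2 + r2"
    using assms(2) unfolding right_reducible_def by blast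
  have "dA y p (s1 + s2) = f + g" using dA_add[OF Rdeg_Rhat[OF 1(1)] Rdeg_Rhat[OF 2(1)]] 1 2 by simp
  moreover have "right_len 0 (s1 + s2)" using 1(2) 2(2) by (rule right_len_add)
  moreover have "right_nonempty (r1 + r2)" using 1(6) 2(6) by (simp add: right_nonempty_def)
  moreover have "s1 + s2 = (l1 + l2) + (r1 + r2)" using 1(7) 2(7) by (simp add: algebra_simps)
  ultimately show ?thesis unfolding right_reducible_def
    using Rdeg_add[OF 1(1) 2(1)] Rdeg_add[OF 1(5) 2(5)] lifted_syz_add[OF 1(4) 2(4)] by blast
qed

lemma right_reducible_smult: assumes "right_reducible p f" shows "right_reducible p (\<lambda>w. c * f w)"
proof -
  obtain s1 l1 r1 where 1: "s1 \<in> Rdeg p" "right_len 0 s1" "dA y p s1 = f" "l1 \<in> lifted_syz p" "r1 \<in> Rdeg p" "right_nonempty r1" "s1 = l1 + r1"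
    using assms(1) unfolding right_reducible_def by blast
  have "dA y p (\<lambda>b. c * s1 b) = (\<lambda>w. c * f w)" using dA_smult[OF Rdeg_Rhat[OF 1(1)]] 1 by simp
  moreover have "right_len 0 (\<lambda>b. c * s1 b)" using 1(2) by (rule right_len_smult)
  moreover have "right_nonempty (\<lambda>b. c * r1 b)" using 1(6) by (simp add: right_nonempty_def)
  moreover have "(\<lambda>b. c * s1 b) = (\<lambda>b. c * l1 b) + (\<lambda>b. c * r1 b)" using 1(7) by (simp add: fun_eq_iff algebra_simps)
  ultimately show ?thesis unfolding right_reducible_def
    using Rdeg_smult[OF 1(1)] Rdeg_smult[OF 1(5)] lifted_syz_smult[OF 1(4)] by blast
qed

lemma right_reducible_tens: assumes "z \<in> tens S T" and "\<And>s t. s \<in> S \<Longrightarrow> t \<in> T \<Longrightarrow> right_reducible p (fmul s t)"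
  shows "right_reducible p z"
  using assms(1)
proof (induction rule: tens_induct)
  case zero show ?case by (rule right_reducible_zero)
next
  case (add f g) then show ?case by (rule right_reducible_add)
next
  case (smult c f) then show ?case by (rule right_reducible_smult)
next
  case (base s t) then show ?case by (rule assms(2))
qed

lemma right_reducible_Wn3: assumes s3: "kerA y 3 \<subseteq> lifted_syz 3" and p3: "3 \<le> p"
  and a: "a \<in> Xt (p-3)" and z3: "z3 \<in> Wn y 3"
  shows "right_reducible p (fmul a z3)"
proof -
  have e1: "1+2+0 = (3::nat)" and e2: "0+2+1 = (3::nat)" by simp_all
  obtain r1 where r1: "r1 \<in> Rdeg 3" "dA y 3 r1 = z3" "right_len 0 r1"
    using dA_right_len_tens[OF Wn3_memD(2)[OF z3], unfolded e1 dA_right_len_def] by blast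
  obtain r2 where r2: "r2 \<in> Rdeg 3" "dA y 3 r2 = z3" "right_len 1 r2"
    using dA_right_len_tens[OF Wn3_memD(1)[OF z3], unfolded e2 dA_right_len_def] by blast
  have "r1 - r2 \<in> kerA y 3"
    using Rdeg_diff[OF r1(1) r2(1)] dA_diff[OF Rdeg_Rhat[OF r1(1)] Rdeg_Rhat[OF r2(1)]] r1(2) r2(2)
    by (simp add: kerA_def)
  then have L: "r1 - r2 \<in> lifted_syz 3" using s3 by blast
  have pe: "p - 3 + 3 = p" using p3 by simp
  let ?\<sigma> = "lmul a r1"
  have "?\<sigma> \<in> Rdeg p" using lmul_Rdeg[OF a r1(1)] pe by simp
  moreover have "right_len 0 ?\<sigma>" using right_len_lmul[OF r1(3)] .
  moreover have "dA y p ?\<sigma> = fmul a z3" using dA_lmul[OF a r1(1)] pe r1(2) by simp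
  moreover have "lmul a (r1 - r2) \<in> lifted_syz p" using lifted_syz_lmul[OF a L] pe by simp
  moreover have "lmul a r2 \<in> Rdeg p" using lmul_Rdeg[OF a r2(1)] pe by simp
  moreover have "right_nonempty (lmul a r2)" using right_len_Suc_right_nonempty right_len_lmul[OF r2(3)] by (metis One_nat_def)
  moreover have "?\<sigma> = lmul a (r1 - r2) + lmul a r2" by (simp add: lmul_diff)
  ultimately show ?thesis unfolding right_reducible_def by blast
qed

lemma right_reducible_JA_Wn2: assumes p2: "2 \<le> p" and jj: "jj \<in> JA y (p-2)" and w: "w \<in> Wn y 2"
  shows "right_reducible p (fmul jj w)"
proof -
  have e0: "0+2+0 = (2::nat)" by simp
  obtain r where r: "r \<in> Rdeg 2" "dA y 2 r = w" "right_len 0 r"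
    using dA_right_len_tens[OF w[unfolded Wn2_eq], unfolded e0 dA_right_len_def] by blast
  obtain r' where r': "r' \<in> Rdeg (p-2)" "jj = dA y (p-2) r'" using jj unfolding JA_def by blast
  have jX: "jj \<in> Xt (p-2)" using JA_Xt[OF jj] .
  have wX: "w \<in> Xt 2" using JA_Xt r unfolding JA_def by blast
  have pe: "p - 2 + 2 = p" using p2 by simp
  let ?\<sigma> = "lmul jj r"
  have "?\<sigma> \<in> Rdeg p" using lmul_Rdeg[OF jX r(1)] pe by simp
  moreover have "right_len 0 ?\<sigma>" using right_len_lmul[OF r(3)] .
  moreover have "dA y p ?\<sigma> = fmul jj w" using dA_lmul[OF jX r(1)] pe r(2) by simp
  moreover have "- (rmul r' w - ?\<sigma>) \<in> lifted_syz p"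
    using lifted_syz_uminus[OF lifted_syz_trivial[OF r'(1) r(1)]] pe r(2) r'(2) by simp
  moreover have "rmul r' w \<in> Rdeg p" using rmul_Rdeg[OF wX r'(1)] pe by simp
  moreover have "right_nonempty (rmul r' w)"
  proof -
    have "w [] = 0" using wX by (simp add: Xt_def)
    then show ?thesis by (simp add: right_nonempty_def rmul_apply splits2_def)
  qed
  moreover have "?\<sigma> = - (rmul r' w - ?\<sigma>) + rmul r' w" by simp
  ultimately show ?thesis unfolding right_reducible_def by blast
qed

lemma dA_right_empty_part_kzC:
  assumes sR: "s \<in> Rdeg p" and p2: "2 \<le> p"
  shows "dA y p (right_empty_part s) \<in> kzC y p 2"
proof -
  obtain Q g where finQ: "finite Q" and gX: "\<And>q. g q \<in> Xt (p-2)"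
    and s0: "right_empty_part s = (\<Sum>q\<in>Q. lmul (g q) (Ybasis q))"
    using right_empty_part_eq_sum_Ybasis[OF sR p2] by blast
  have pe: "p - 2 + 2 = p" using p2 by simp
  have "dA y p (right_empty_part s) = (\<Sum>q\<in>Q. dA y p (lmul (g q) (Ybasis q)))"
    unfolding s0 by (rule dA_sum, rule Rdeg_Rhat, rule lmul_Rdeg[OF gX Ybasis_Rdeg])
  also have "\<dots> = (\<Sum>q\<in>Q. fmul (g q) (dA y 2 (Ybasis q)))"
    using dA_lmul[OF gX Ybasis_Rdeg] pe by simp
  also have "\<dots> \<in> tens (Xt (p-2)) (Wn y 2)"
    by (intro tens_sum tens_gen[OF gX] JA_Wn2) (simp add: JA_def Ybasis_Rdeg)
  finally show ?thesis using p2 by (simp add: kzC_def)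
qed

lemma dA_right_empty_part_kzRel:
  assumes fin: "finite (UNIV :: 'x set)" and s: "s \<in> kerA y (Suc k)"
  shows "dA y (Suc k) (right_empty_part s) \<in> kzRel y (Suc k) 1"
proof -
  have sR: "s \<in> Rdeg (Suc k)" and sA: "dA y (Suc k) s = 0" using s by (auto simp: kerA_def)
  have pdeg: "strip_right s x \<in> Rdeg k" for x using strip_right_Rdeg[OF sR] .
  let ?S = "\<Sum>x\<in>UNIV. rmul (strip_right s x) (delta [x])"
  have SR: "?S \<in> Rhat" using rmul_Rdeg[OF delta_Xt pdeg] Rdeg_Rhat by (intro Rhat_sum) blast
  have "0 = dA y (Suc k) (right_empty_part s + ?S)"
    using sA right_letter_decomp[OF fin, of s] by simp
  also have "\<dots> = dA y (Suc k) (right_empty_part s) + (\<Sum>x\<in>UNIV. fmul (dA y k (strip_right s x)) (delta [x]))"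
    using dA_add[OF Rdeg_Rhat[OF right_empty_part_Rdeg[OF sR]] SR] dA_sum_rmul_delta[OF pdeg] by simp
  finally have e: "dA y (Suc k) (right_empty_part s) = - (\<Sum>x\<in>UNIV. fmul (dA y k (strip_right s x)) (delta [x]))"
    by (simp add: eq_neg_iff_add_eq_0)
  have "fmul (dA y k (strip_right s x)) (delta [x]) \<in> tens (JA y k) (Xt 1)" for x
    using tens_gen[OF _ delta_Xt[of "[x]"]] pdeg by (simp add: JA_def)
  then have "dA y (Suc k) (right_empty_part s) \<in> tens (JA y k) (Xt 1)"
    unfolding e by (intro tens_uminus tens_sum)
  then show ?thesis by (simp add: kzRel_def Wn_def)
qed

lemma right_reducible_of_koszul:
  assumes kosz: "koszul y" and s3: "kerA y 3 \<subseteq> lifted_syz 3" and p3: "3 \<le> p"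
    and eC: "e \<in> kzC y p 2" and eR: "e \<in> kzRel y p 1"
  shows "right_reducible p e"
proof -
  have "(if (2::nat) = 0 then kzC y p 0 else kzC y p 2 \<inter> kzRel y p (2 - 1))
      \<subseteq> setplus (kzC y p (Suc 2)) (kzRel y p 2)"
    by (rule kosz[unfolded koszul_def, rule_format]) (use p3 in simp_all)
  then have "e \<in> setplus (kzC y p 3) (kzRel y p 2)" using eC eR by (simp add: numeral_3_eq_3 subset_iff)
  then obtain a b where ab: "e = a + b" and a: "a \<in> tens (Xt (p-3)) (Wn y 3)"
    and b: "b \<in> tens (JA y (p-2)) (Wn y 2)"
    using p3 unfolding setplus_def kzC_def kzRel_def by auto
  have "right_reducible p a" using a by (rule right_reducible_tens) (rule right_reducible_Wn3[OF s3 p3])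
  moreover have "right_reducible p b" using b by (rule right_reducible_tens) (use p3 right_reducible_JA_Wn2 in simp)
  ultimately show ?thesis using right_reducible_add ab by simp
qed

lemma syz_step:
  assumes fin: "finite (UNIV :: 'x set)" and kosz: "koszul y"
    and s2: "kerA y 2 \<subseteq> lifted_syz 2" and s3: "kerA y 3 \<subseteq> lifted_syz 3"
    and sk: "kerA y k \<subseteq> lifted_syz k" and k3: "3 \<le> k"
    and s: "s \<in> kerA y (Suc k)"
  shows "s \<in> lifted_syz (Suc k)"
proof -
  have sR: "s \<in> Rdeg (Suc k)" and sA: "dA y (Suc k) s = 0" using s by (auto simp: kerA_def)
  define s0 where "s0 = right_empty_part s"
  have s0R: "s0 \<in> Rdeg (Suc k)" unfolding s0_def using right_empty_part_Rdeg[OF sR] .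
  have "right_reducible (Suc k) (dA y (Suc k) s0)"
    using right_reducible_of_koszul[OF kosz s3] dA_right_empty_part_kzC[OF sR] dA_right_empty_part_kzRel[OF fin s] k3
    by (simp add: s0_def)
  then obtain \<sigma> l \<rho> where \<sigma>: "\<sigma> \<in> Rdeg (Suc k)" "right_len 0 \<sigma>" "dA y (Suc k) \<sigma> = dA y (Suc k) s0"
    and l: "l \<in> lifted_syz (Suc k)" and \<rho>: "right_nonempty \<rho>" "\<sigma> = l + \<rho>"
    unfolding right_reducible_def by blast
  have d: "s0 - \<sigma> \<in> lifted_syz (Suc k)"
  proof (rule lifted_syz_of_right_len0[OF fin s2])
    show "s0 - \<sigma> \<in> Rdeg (Suc k)" using Rdeg_diff[OF s0R \<sigma>(1)] .
    show "right_len 0 (s0 - \<sigma>)" using \<sigma>(2) by (intro right_len_diff) (simp add: s0_def right_len_def right_empty_part_def)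
    show "dA y (Suc k) (s0 - \<sigma>) = 0" using dA_diff[OF Rdeg_Rhat[OF s0R] Rdeg_Rhat[OF \<sigma>(1)]] \<sigma>(3) by simp
  qed
  define \<tau> where "\<tau> = s - (s0 - \<sigma>) - l"
  have "\<tau> \<in> kerA y (Suc k)"
    unfolding \<tau>_def using kerA_diff[OF kerA_diff[OF s lifted_syz_kerA[OF d]] lifted_syz_kerA[OF l]] .
  moreover have "right_nonempty \<tau>"
    using \<rho> by (simp add: right_nonempty_def \<tau>_def s0_def right_empty_part_def)
  ultimately have "\<tau> \<in> lifted_syz (Suc k)"
    by (rule lifted_syz_of_right_nonempty[OF fin sk])
  then have "\<tau> + (s0 - \<sigma>) + l \<in> lifted_syz (Suc k)" using d l by (intro lifted_syz_add)
  then show ?thesis by (simp add: \<tau>_def)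
qed

lemma syz_surj_iff_lifted_syz: "syz_surj y p \<longleftrightarrow> kerA y p \<subseteq> lifted_syz p"
  unfolding syz_surj_def lifted_syz_def by (auto simp: image_iff)

lemma syz_surj_of_koszul:
  assumes fin: "finite (UNIV :: 'x set)" and kosz: "koszul y"
    and s2: "syz_surj y 2" and s3: "syz_surj y 3"
  shows "\<forall>p\<ge>2. syz_surj y p"
proof -
  have L2: "kerA y 2 \<subseteq> lifted_syz 2" and L3: "kerA y 3 \<subseteq> lifted_syz 3"
    using s2 s3 syz_surj_iff_lifted_syz by blast+
  have "kerA y p \<subseteq> lifted_syz p" if "3 \<le> p" for p
    using that
  proof (induction p rule: nat_induct_at_least)
    case base
    then show ?case by (rule L3)
  next
    case (Suc k)
    then show ?case using syz_step[OF fin kosz L2 L3] by blast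
  qed
  then have "kerA y p \<subseteq> lifted_syz p" if "2 \<le> p" for p
    using L2 that by (cases "p = 2") auto
  then show ?thesis by (simp add: syz_surj_iff_lifted_syz)
qed

end

theorem theorem3p4:
  fixes y :: "'q \<Rightarrow> 'x list \<Rightarrow> rat"
  assumes "\<forall>q. y q \<in> IF 2"
  shows "((\<forall>p\<ge>2. syz_surj y p) \<longrightarrow> quadratic y)
       \<and> ((finite (UNIV :: 'x set) \<and> koszul y \<and> syz_surj y 2 \<and> syz_surj y 3)
            \<longrightarrow> quadratic y)"
proof -
  interpret deg2_relations y using assms by unfold_locales
  show ?thesis using quadratic_of_syz_surj syz_surj_of_koszul by blast
qed

end
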